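(* Let $\beta>\beta_c$ and $0<\delta<\beta$. The function $T_\delta$ is $C^1$ on $(0,\infty)$; it is $C^2$ on $(0,q_\delta^{-1/2})\cup(q_\delta^{-1/2},\infty)$ if $0<\delta<\beta/2$ and $C^2$ on $(0,\infty)$ if $\beta/2\le\delta<\beta$. If $\delta\le\beta/2$ (in which case $q^*_\delta=0$), $T_\delta$ is strictly concave on $(0,\infty)$. If $\beta/2<\delta<\beta$ (in which case $q^*_\delta>0$), $T_\delta$ is strictly concave on $(0,(q_\delta^* )^{-1/2})$ and strictly convex on $((q_\delta^* )^{-1/2},\infty)$.
   Context: $\Gamma_\beta=\frac{e^{-\beta}+e^{-3\beta/2}}{1-e^{-\beta/2}}$, $\beta_c$ the unique positive solution of $\Gamma_\beta=1$. $c_\beta=\frac{1+e^{-\beta/2}}{1-e^{-\beta/2}}$, $\mathcal L(h)=\log\sum_{k\in\mathbb Z}e^{hk}e^{-\beta|k|/2}/c_\beta$ for $|h|<\beta/2$. $\mathcal G(h)=\int_0^1\mathcal L(h(x-\frac12))dx$, $\tilde h(q)$ the unique $h\in[0,\beta)$ with $\mathcal G'(h)=q$; $\mathcal H_\delta(s)=\int_0^1\mathcal L(sx+\delta-\frac\beta2)dx$ for $s\in(-\delta,\beta-\delta)$, $s_\delta(q)$ the unique solution of $\mathcal H_\delta'(s)=q$; $\delta_0(q)=\frac\beta2-\frac{\tilde h(q)}2$; $\psi(q,\delta)=\mathcal G(\tilde h(q))-q\tilde h(q)$ if $0\le\delta\le\delta_0(q)$, $\mathcal H_\delta(s_\delta(q))-qs_\delta(q)$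 if $\delta_0(q)<\delta<\beta$. $T_\delta(a)=a\log\Gamma_\beta+a\,\psi(1/a^2,\delta)$ for $a>0$. $q_\delta=\inf\{q>0:\delta>\delta_0(q)\}$ and $q^*_\delta=\inf\{q>0:\delta-\frac\beta2+s_\delta(q)\ge0\}$. *)

theory Defs
  imports "HOL-Analysis.Analysis"
begin

definition Gamma :: "real \<Rightarrow> real" where
  "Gamma \<beta> = (exp (-\<beta>) + exp (-3*\<beta>/2)) / (1 - exp (-\<beta>/2))"

definition beta_c :: real where
  "beta_c = (THE b. b > 0 \<and> Gamma b = 1)"

definition cc :: "real \<Rightarrow> real" where
  "cc \<beta> = (1 + exp (-\<beta>/2)) / (1 - exp (-\<beta>/2))"

text \<open>Log-moment generating function (meaningful for |h| < beta/2).\<close>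
definition LL :: "real \<Rightarrow> real \<Rightarrow> real" where
  "LL \<beta> h = ln ((\<Sum>\<^sub>\<infinity>k::int. exp (h * of_int k) * exp (-\<beta> * of_int \<bar>k\<bar> / 2)) / cc \<beta>)"

definition GG :: "real \<Rightarrow> real \<Rightarrow> real" where
  "GG \<beta> h = integral {0..1} (\<lambda>x. LL \<beta> (h * (x - 1/2)))"

definition htilde :: "real \<Rightarrow> real \<Rightarrow> real" where
  "htilde \<beta> q = (THE h. 0 \<le> h \<and> h < \<beta> \<and> deriv (GG \<beta>) h = q)"

definition HH :: "real \<Rightarrow> real \<Rightarrow> real \<Rightarrow> real" where
  "HH \<beta> \<delta> s = integral {0..1} (\<lambda>x. LL \<beta> (s * x + \<delta> - \<beta>/2))"

definition sdelta :: "real \<Rightarrow> real \<Rightarrow> real \<Rightarrow> real" where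
  "sdelta \<beta> \<delta> q = (THE s. -\<delta> < s \<and> s < \<beta> - \<delta> \<and> deriv (HH \<beta> \<delta>) s = q)"

definition delta0 :: "real \<Rightarrow> real \<Rightarrow> real" where
  "delta0 \<beta> q = \<beta>/2 - htilde \<beta> q / 2"

definition psi :: "real \<Rightarrow> real \<Rightarrow> real \<Rightarrow> real" where
  "psi \<beta> q \<delta> =
     (if 0 \<le> \<delta> \<and> \<delta> \<le> delta0 \<beta> q
      then GG \<beta> (htilde \<beta> q) - q * htilde \<beta> q
      else HH \<beta> \<delta> (sdelta \<beta> \<delta> q) - q * sdelta \<beta> \<delta> q)"

definition TT :: "real \<Rightarrow> real \<Rightarrow> real \<Rightarrow> real" where
  "TT \<beta> \<delta> a = a * ln (Gamma \<beta>) + a * psi \<beta> (1 / a^2) \<delta>"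

definition qdelta :: "real \<Rightarrow> real \<Rightarrow> real" where
  "qdelta \<beta> \<delta> = Inf {q. q > 0 \<and> \<delta> > delta0 \<beta> q}"

definition qstar :: "real \<Rightarrow> real \<Rightarrow> real" where
  "qstar \<beta> \<delta> = Inf {q. q > 0 \<and> \<delta> - \<beta>/2 + sdelta \<beta> \<delta> q \<ge> 0}"

definition strict_convex_on :: "real set \<Rightarrow> (real \<Rightarrow> real) \<Rightarrow> bool" where
  "strict_convex_on S f \<longleftrightarrow> convex S \<and>
    (\<forall>x\<in>S. \<forall>y\<in>S. x \<noteq> y \<longrightarrow> (\<forall>u. 0 < u \<and> u < 1 \<longrightarrow>
        f (u * x + (1 - u) * y) < u * f x + (1 - u) * f y))"

definition strict_concave_on :: "real set \<Rightarrow> (real \<Rightarrow> real) \<Rightarrow> bool" where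
  "strict_concave_on S f \<longleftrightarrow> strict_convex_on S (\<lambda>x. - f x)"

end

(*
  For |u| < beta/2 the series defining L sums to the closed form
  L(u) = 2 ln(1 - e^(-beta/2)) - ln(1 - e^(u - beta/2)) - ln(1 - e^(-u - beta/2)),
  an even function with L'' >= e^(-beta) whose derivative blows up at the ends of the interval.
  Hence H_delta(s) = int_0^1 L(s x + delta - beta/2) dx is strictly convex with H_delta' onto the
  reals, and by evenness of L the centred integral is the rescaling G(h) = H_(beta/2)(h/2).
  So htilde and s_delta invert G' and H_delta', and psi(q) = F(k q) - q k q has derivative -k(q)
  on each branch (F = G, k = htilde, resp. F = H_delta, k = s_delta). With q = 1/a^2 this gives
  T'(a) = ln Gamma + psi + 2 q k(q) and T''(a) = -(2/a^3) (k(q) + 2 q / F''(k(q))).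
  On the G-branch k = htilde > 0, so T'' < 0. On the H-branch the identity
  s H''(s) + 2 H'(s) = L'(s + delta - beta/2) shows that T'' has the sign of
  -(s_delta(q) + delta - beta/2), which changes sign exactly at q = q*_delta.
  For delta < beta/2 the branches meet at q_delta, where htilde = s_delta = beta - 2 delta and,
  again by the symmetry of L, the two values of psi agree; so T and T' are continuous across
  a = q_delta^(-1/2).
*)
theory Submission
  imports Defs
begin

lemma integral_even_real:
  fixes f :: "real \<Rightarrow> real"
  assumes "continuous_on {-r..r} f" "\<And>x. f (-x) = f x" "0 \<le> r"
  shows "integral {-r..r} f = 2 * integral {0..r} f"
proof -
  have "integral {-r..0} f = integral {-r..-0} (\<lambda>x. f (-x))" using assms(2) by simp
  also have "\<dots> = integral {0..r} f" by (rule Henstock_Kurzweil_Integration.integral_reflect_real)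
  finally have "integral {-r..0} f = integral {0..r} f" .
  moreover have "integral {-r..0} f + integral {0..r} f = integral {-r..r} f"
    by (rule Henstock_Kurzweil_Integration.integral_combine)
       (use assms in \<open>auto intro: integrable_continuous_real\<close>)
  ultimately show ?thesis by simp
qed

lemma integral_odd_real:
  fixes f :: "real \<Rightarrow> real"
  assumes "continuous_on {-r..r} f" "\<And>x. f (-x) = - f x" "0 \<le> r"
  shows "integral {-r..r} f = 0"
proof -
  have "integral {-r..0} f = - integral {-r..-0} (\<lambda>x. f (-x))" using assms(2) by simp
  also have "\<dots> = - integral {0..r} f"
    by (subst Henstock_Kurzweil_Integration.integral_reflect_real) simp
  finally have "integral {-r..0} f = - integral {0..r} f" .
  moreover have "integral {-r..0} f + integral {0..r} f = integral {-r..r} f"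
    by (rule Henstock_Kurzweil_Integration.integral_combine)
       (use assms in \<open>auto intro: integrable_continuous_real\<close>)
  ultimately show ?thesis by simp
qed

lemma integral_01_eq_centred:
  fixes g :: "real \<Rightarrow> real"
  assumes "continuous_on {0..1} g"
  shows "integral {0..1} g = integral {-1..1} (\<lambda>t. g ((1 + t) / 2)) / 2"
proof -
  have "((\<lambda>t. (1/2) *\<^sub>R g ((1 + t) / 2)) has_integral integral {(1 + -1)/2..(1 + 1)/2} g) {-1..1}"
    by (rule has_integral_substitution[where c=0 and d=1]) (auto intro!: assms derivative_eq_intros)
  then show ?thesis by (simp add: has_integral_iff)
qed

lemma continuous_on_centred:
  fixes g :: "real \<Rightarrow> real"
  assumes "continuous_on {0..1} g"
  shows "continuous_on {-1..1} (\<lambda>t. g ((1 + t) / 2))"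
  by (rule continuous_on_compose2[OF assms]) (auto intro!: continuous_intros)

lemma integral_01_symmetric:
  fixes g :: "real \<Rightarrow> real"
  assumes "continuous_on {0..1} g" "\<And>x. g (1 - x) = g x"
  shows "integral {0..1} g = integral {0..1} (\<lambda>t. g ((1 + t) / 2))"
proof -
  have "g ((1 + -t) / 2) = g ((1 + t) / 2)" for t
    using assms(2)[of "(1 + t) / 2"] by (simp add: field_simps)
  then show ?thesis
    unfolding integral_01_eq_centred[OF assms(1)]
    by (subst integral_even_real[OF continuous_on_centred[OF assms(1)]]) auto
qed

lemma integral_01_antisymmetric:
  fixes g :: "real \<Rightarrow> real"
  assumes "continuous_on {0..1} g" "\<And>x. g (1 - x) = - g x"
  shows "integral {0..1} g = 0"
proof -
  have "g ((1 + -t) / 2) = - g ((1 + t) / 2)" for t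
    using assms(2)[of "(1 + t) / 2"] by (simp add: field_simps)
  then show ?thesis
    unfolding integral_01_eq_centred[OF assms(1)]
    by (subst integral_odd_real[OF continuous_on_centred[OF assms(1)]]) auto
qed

lemma strict_mono_on_if_deriv_pos:
  fixes f f' :: "real \<Rightarrow> real"
  assumes "convex S" "\<And>x. x \<in> S \<Longrightarrow> (f has_real_derivative f' x) (at x)" "\<And>x. x \<in> S \<Longrightarrow> 0 < f' x"
  shows "strict_mono_on S f"
proof (rule strict_mono_onI)
  fix x y assume xy: "x \<in> S" "y \<in> S" "x < y"
  have "{x..y} \<subseteq> S"
    using xy assms(1) closed_segment_eq_real_ivl convex_contains_segment by fastforce
  then show "f x < f y"
    using assms(2,3) by (intro DERIV_pos_imp_increasing[OF \<open>x < y\<close>]) (meson atLeastAtMost_iff subsetD)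
qed

lemma strict_antimono_on_if_deriv_neg:
  fixes f f' :: "real \<Rightarrow> real"
  assumes "convex S" "\<And>x. x \<in> S \<Longrightarrow> (f has_real_derivative f' x) (at x)" "\<And>x. x \<in> S \<Longrightarrow> f' x < 0"
  shows "strict_antimono_on S f"
proof -
  have "strict_mono_on S (\<lambda>x. - f x)"
    by (rule strict_mono_on_if_deriv_pos[OF assms(1) DERIV_minus[OF assms(2)]]) (use assms(3) in auto)
  then show ?thesis by (auto simp: monotone_on_def)
qed

lemma strict_convex_on_if_deriv_strict_mono:
  fixes f f' :: "real \<Rightarrow> real"
  assumes S: "convex S" and D: "\<And>x. x \<in> S \<Longrightarrow> (f has_real_derivative f' x) (at x)"
    and mono: "strict_mono_on S f'"
  shows "strict_convex_on S f"
proof -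
  have less: "f (u * x + (1 - u) * y) < u * f x + (1 - u) * f y"
    if xy: "x \<in> S" "y \<in> S" "x < y" and u: "0 < u" "u < 1" for x y u
  proof -
    define z where "z = u * x + (1 - u) * y"
    have zx: "z - x = (1 - u) * (y - x)" and yz: "y - z = u * (y - x)"
      by (simp_all add: z_def algebra_simps)
    have "0 < (1 - u) * (y - x)" "0 < u * (y - x)" using xy u by simp_all
    then have "x < z" "z < y" by (simp_all only: zx[symmetric] yz[symmetric])
    have seg: "t \<in> S" if "x \<le> t" "t \<le> y" for t
      using that xy S closed_segment_eq_real_ivl convex_contains_segment by fastforce
    obtain a where a: "x < a" "a < z" "f z - f x = (z - x) * f' a"
      using MVT2[OF \<open>x < z\<close>, of f f'] D seg \<open>z < y\<close> by force
    obtain b where b: "z < b" "b < y" "f y - f z = (y - z) * f' b"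
      using MVT2[OF \<open>z < y\<close>, of f f'] D seg \<open>x < z\<close> by force
    have "f' a < f' b"
      using a b seg \<open>x < z\<close> \<open>z < y\<close> by (intro strict_mono_onD[OF mono]) auto
    have "u * f x + (1 - u) * f y - f z = - u * (f z - f x) + (1 - u) * (f y - f z)"
      by (simp add: algebra_simps)
    also have "\<dots> = u * (1 - u) * (y - x) * (f' b - f' a)"
      unfolding a(3) b(3) zx yz by (simp add: algebra_simps)
    also have "\<dots> > 0" using u xy \<open>f' a < f' b\<close> by simp
    finally show ?thesis unfolding z_def by simp
  qed
  show ?thesis
    unfolding strict_convex_on_def
  proof (intro conjI S ballI impI allI)
    fix x y u :: real assume xy: "x \<in> S" "y \<in> S" "x \<noteq> y" and u: "0 < u \<and> u < 1"
    then consider "x < y" | "y < x" by linarith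
    then show "f (u * x + (1 - u) * y) < u * f x + (1 - u) * f y"
    proof cases
      case 1
      then show ?thesis using less xy u by blast
    next
      case 2
      then show ?thesis using less[of y x "1 - u"] xy u by (simp add: algebra_simps)
    qed
  qed
qed

lemma strict_concave_on_if_deriv_strict_antimono:
  fixes f f' :: "real \<Rightarrow> real"
  assumes "convex S" "\<And>x. x \<in> S \<Longrightarrow> (f has_real_derivative f' x) (at x)"
    and "strict_antimono_on S f'"
  shows "strict_concave_on S f"
  unfolding strict_concave_on_def
  by (rule strict_convex_on_if_deriv_strict_mono[OF assms(1) DERIV_minus[OF assms(2)]])
     (use assms(3) in \<open>auto simp: monotone_on_def\<close>)

lemma has_real_derivative_if_split:
  fixes f g :: "real \<Rightarrow> real"
  assumes f: "(f has_real_derivative D) (at a)" and g: "(g has_real_derivative D) (at a)"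
    and "f a = g a"
  shows "((\<lambda>x. if x < a then f x else g x) has_real_derivative D) (at a)"
proof -
  let ?F = "\<lambda>x. if x < a then f x else g x"
  have "((\<lambda>y. (f y - f a) / (y - a)) \<longlongrightarrow> D) (at_left a)"
    using has_field_derivative_at_within[OF f] by (simp add: has_field_derivative_iff)
  moreover have "eventually (\<lambda>y. y < a) (at_left a)"
    by (simp add: eventually_at_filter)
  then have "eventually (\<lambda>y. (f y - f a) / (y - a) = (?F y - ?F a) / (y - a)) (at_left a)"
    by eventually_elim (use assms(3) in auto)
  ultimately have L: "((\<lambda>y. (?F y - ?F a) / (y - a)) \<longlongrightarrow> D) (at_left a)"
    by (rule Lim_transform_eventually)
  have "((\<lambda>y. (g y - g a) / (y - a)) \<longlongrightarrow> D) (at_right a)"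
    using has_field_derivative_at_within[OF g] by (simp add: has_field_derivative_iff)
  moreover have "eventually (\<lambda>y. (g y - g a) / (y - a) = (?F y - ?F a) / (y - a)) (at_right a)"
    using eventually_at_right_less[of a] by eventually_elim auto
  ultimately have R: "((\<lambda>y. (?F y - ?F a) / (y - a)) \<longlongrightarrow> D) (at_right a)"
    by (rule Lim_transform_eventually)
  from L R show ?thesis
    by (simp add: has_field_derivative_iff filterlim_at_split)
qed

lemma C1_differentiable_on_if_deriv:
  fixes f f' :: "real \<Rightarrow> real"
  assumes "\<And>x. x \<in> S \<Longrightarrow> (f has_real_derivative f' x) (at x)" "continuous_on S f'"
  shows "f C1_differentiable_on S"
  unfolding C1_differentiable_on_def
  using assms has_real_derivative_iff_has_vector_derivative by blast

lemma inverse_square_has_derivative: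
  fixes a :: real
  assumes "0 < a"
  shows "((\<lambda>a. 1 / a^2) has_real_derivative -2 / a^3) (at a)"
  using assms by (auto intro!: derivative_eq_intros simp: field_simps power2_eq_square power3_eq_cube)

lemma has_integral_01_if_deriv:
  fixes f f' :: "real \<Rightarrow> real"
  assumes "\<And>x. x \<in> {0..1} \<Longrightarrow> (f has_real_derivative f' x) (at x)"
  shows "(f' has_integral (f 1 - f 0)) {0..1}"
proof (rule fundamental_theorem_of_calculus)
  fix x :: real assume "x \<in> {0..1}"
  then show "(f has_vector_derivative f' x) (at x within {0..1})"
    using assms has_real_derivative_iff_has_vector_derivative has_vector_derivative_at_within by blast
qed simp

section \<open>Closed form of the log-moment generating function\<close>

lemma has_sum_int_geometric:
  fixes x y :: real
  assumes x: "0 \<le> x" "x < 1" and y: "0 \<le> y" "y < 1"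
  shows "((\<lambda>k::int. if 0 \<le> k then x ^ nat k else y ^ nat (-k)) has_sum (1/(1-x) + y/(1-y))) UNIV"
proof -
  let ?f = "\<lambda>k::int. if 0 \<le> k then x ^ nat k else y ^ nat (-k)"
  let ?neg = "\<lambda>n::nat. - int n - 1"
  have geo: "((\<lambda>n. z ^ n) has_sum 1/(1-z)) UNIV" if "0 \<le> z" "z < 1" for z :: real
    by (rule sums_nonneg_imp_has_sum) (use geometric_sums[of z] that in auto)
  have "((?f \<circ> int) has_sum 1/(1-x)) UNIV"
    using geo[OF x] by (simp add: o_def)
  then have nonneg: "(?f has_sum 1/(1-x)) (range int)"
    by (subst has_sum_reindex) (auto simp: inj_on_def)
  have "nat (1 + int n) = Suc n" for n by simp
  then have "(?f \<circ> ?neg) = (\<lambda>n. y * y ^ n)"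
    by (simp add: fun_eq_iff)
  then have "((?f \<circ> ?neg) has_sum y * (1/(1-y))) UNIV"
    using has_sum_cmult_right[OF geo[OF y], of y] by simp
  then have neg: "(?f has_sum y/(1-y)) (range ?neg)"
    by (subst has_sum_reindex) (auto simp: inj_on_def)
  have "range int \<union> range ?neg = (UNIV :: int set)"
  proof -
    have "k \<in> range int \<union> range ?neg" for k :: int
    proof (cases "0 \<le> k")
      case True then show ?thesis by (auto intro!: image_eqI[of _ _ "nat k"])
    next
      case False then show ?thesis by (auto intro!: image_eqI[of _ _ "nat (-k-1)"])
    qed
    then show ?thesis by blast
  qed
  moreover have "(?f has_sum (1/(1-x) + y/(1-y))) (range int \<union> range ?neg)"
    by (rule has_sum_Un_disjoint[OF nonneg neg]) auto
  ultimately show ?thesis by simp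
qed

definition Lclosed :: "real \<Rightarrow> real \<Rightarrow> real" where
  "Lclosed \<beta> u = 2 * ln (1 - exp (-\<beta>/2)) - ln (1 - exp (u - \<beta>/2)) - ln (1 - exp (-u - \<beta>/2))"

lemma LL_eq_Lclosed:
  assumes "\<bar>h\<bar> < \<beta>/2"
  shows "LL \<beta> h = Lclosed \<beta> h"
proof -
  define x where "x = exp (h - \<beta>/2)"
  define y where "y = exp (-h - \<beta>/2)"
  define r where "r = exp (-\<beta>/2)"
  have x: "0 < x" "x < 1" and y: "0 < y" "y < 1" and r: "0 < r" "r < 1"
    using assms by (auto simp: x_def y_def r_def)
  have summand: "exp (h * of_int k) * exp (-\<beta> * of_int \<bar>k\<bar> / 2)
      = (if 0 \<le> k then x ^ nat k else y ^ nat (-k))" for k :: int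
    by (auto simp: x_def y_def exp_of_nat_mult[symmetric] exp_add[symmetric] algebra_simps)
  have "(\<Sum>\<^sub>\<infinity>k::int. exp (h * of_int k) * exp (-\<beta> * of_int \<bar>k\<bar> / 2)) = 1/(1-x) + y/(1-y)"
    unfolding summand using has_sum_int_geometric[of x y] x y by (simp add: infsumI)
  also have "\<dots> = (1 - x*y) / ((1-x)*(1-y))"
    using x y by (simp add: field_simps)
  also have "x * y = r * r"
    by (simp add: x_def y_def r_def exp_add[symmetric])
  also have "(1 - r*r) / ((1-x)*(1-y)) = (1-r)^2 / ((1-x)*(1-y)) * ((1+r)/(1-r))"
    using x y r by (simp add: divide_simps power2_eq_square) (simp add: algebra_simps)
  also have "(1+r)/(1-r) = cc \<beta>"
    by (simp add: cc_def r_def)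
  finally have sum: "(\<Sum>\<^sub>\<infinity>k::int. exp (h * of_int k) * exp (-\<beta> * of_int \<bar>k\<bar> / 2))
      = (1-r)^2 / ((1-x)*(1-y)) * cc \<beta>" .
  have "cc \<beta> = (1+r)/(1-r)"
    by (simp add: cc_def r_def)
  then have "cc \<beta> > 0"
    using r by simp
  then have "LL \<beta> h = ln ((1-r)^2 / ((1-x)*(1-y)))"
    unfolding LL_def sum by simp
  also have "\<dots> = 2 * ln (1-r) - ln (1-x) - ln (1-y)"
    using x y r by (simp add: ln_div ln_mult ln_realpow)
  finally show ?thesis by (simp add: Lclosed_def x_def y_def r_def)
qed

definition geom_tail :: "real \<Rightarrow> real \<Rightarrow> real" where
  "geom_tail \<beta> u = exp (u - \<beta>/2) / (1 - exp (u - \<beta>/2))"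

definition geom_tail' :: "real \<Rightarrow> real \<Rightarrow> real" where
  "geom_tail' \<beta> u = exp (u - \<beta>/2) / (1 - exp (u - \<beta>/2))^2"

definition geom_tail'' :: "real \<Rightarrow> real \<Rightarrow> real" where
  "geom_tail'' \<beta> u = exp (u - \<beta>/2) * (1 + exp (u - \<beta>/2)) / (1 - exp (u - \<beta>/2))^3"

definition Lclosed' :: "real \<Rightarrow> real \<Rightarrow> real" where
  "Lclosed' \<beta> u = geom_tail \<beta> u - geom_tail \<beta> (-u)"

definition Lclosed'' :: "real \<Rightarrow> real \<Rightarrow> real" where
  "Lclosed'' \<beta> u = geom_tail' \<beta> u + geom_tail' \<beta> (-u)"

definition Lclosed''' :: "real \<Rightarrow> real \<Rightarrow> real" where
  "Lclosed''' \<beta> u = geom_tail'' \<beta> u - geom_tail'' \<beta> (-u)"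

definition Lclosed_deriv :: "real \<Rightarrow> nat \<Rightarrow> real \<Rightarrow> real" where
  "Lclosed_deriv \<beta> n = [Lclosed \<beta>, Lclosed' \<beta>, Lclosed'' \<beta>, Lclosed''' \<beta>] ! min n 3"

lemma Lclosed_deriv_simps [simp]:
  "Lclosed_deriv \<beta> 0 = Lclosed \<beta>" "Lclosed_deriv \<beta> (Suc 0) = Lclosed' \<beta>"
  "Lclosed_deriv \<beta> (Suc (Suc 0)) = Lclosed'' \<beta>" "Lclosed_deriv \<beta> (Suc (Suc (Suc 0))) = Lclosed''' \<beta>"
  "Lclosed_deriv \<beta> 1 = Lclosed' \<beta>" "Lclosed_deriv \<beta> 2 = Lclosed'' \<beta>" "Lclosed_deriv \<beta> 3 = Lclosed''' \<beta>"
  by (simp_all add: Lclosed_deriv_def)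

lemma geom_tail_has_derivative:
  assumes "u < \<beta>/2"
  shows "(geom_tail \<beta> has_real_derivative geom_tail' \<beta> u) (at u)"
proof -
  have t: "exp (u - \<beta>/2) < 1" using assms by simp
  have exp_shift: "((\<lambda>u. exp (u - \<beta>/2)) has_real_derivative exp (u - \<beta>/2)) (at u)"
    by (auto intro!: derivative_eq_intros)
  have "((\<lambda>t. t / (1 - t)) has_real_derivative 1 / (1 - t)^2) (at t)" if "t < 1" for t :: real
  proof -
    have "((\<lambda>t. t / (1 - t)) has_real_derivative (1 * (1-t) - (-1) * t) / ((1-t) ^ Suc (Suc 0))) (at t)"
      by (rule DERIV_quotient) (use that in \<open>auto intro!: derivative_eq_intros\<close>)
    then show ?thesis using that by (simp add: power2_eq_square)
  qed
  from DERIV_chain2[OF this[OF t] exp_shift]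
  show ?thesis
    unfolding geom_tail_def geom_tail'_def by (simp add: field_simps)
qed

lemma geom_tail'_has_derivative:
  assumes "u < \<beta>/2"
  shows "(geom_tail' \<beta> has_real_derivative geom_tail'' \<beta> u) (at u)"
proof -
  have t: "exp (u - \<beta>/2) < 1" using assms by simp
  have exp_shift: "((\<lambda>u. exp (u - \<beta>/2)) has_real_derivative exp (u - \<beta>/2)) (at u)"
    by (auto intro!: derivative_eq_intros)
  have "((\<lambda>t. t / (1 - t)^2) has_real_derivative (1 + t) / (1 - t)^3) (at t)" if "t < 1" for t :: real
  proof -
    have "((\<lambda>t. t / (1 - t)^2) has_real_derivative
        (1 * (1-t)^2 - (2 * (1-t) * (-1)) * t) / (((1-t)^2) ^ Suc (Suc 0))) (at t)"
      by (rule DERIV_quotient) (use that in \<open>auto intro!: derivative_eq_intros\<close>)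
    moreover have "(1 * (1-t)^2 - (2 * (1-t) * (-1)) * t) / (((1-t)^2) ^ Suc (Suc 0))
        = ((1+t)*(1-t)) / ((1-t)^3*(1-t))"
      by (simp add: power2_eq_square power3_eq_cube algebra_simps)
    ultimately show ?thesis using that by simp
  qed
  from DERIV_chain2[OF this[OF t] exp_shift]
  show ?thesis
    unfolding geom_tail'_def geom_tail''_def by (simp add: field_simps)
qed

lemma Lclosed_has_derivative:
  assumes "\<bar>u\<bar> < \<beta>/2"
  shows "(Lclosed \<beta> has_real_derivative Lclosed' \<beta> u) (at u)"
proof -
  have "0 < 1 - exp (u - \<beta>/2)" "0 < 1 - exp (-u - \<beta>/2)" using assms by auto
  then have "(Lclosed \<beta> has_real_derivative
      0 - (0 - exp (u - \<beta>/2)) / (1 - exp (u - \<beta>/2))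
        - (0 - exp (-u - \<beta>/2) * (-1 - 0)) / (1 - exp (-u - \<beta>/2))) (at u)"
    unfolding Lclosed_def by (auto intro!: derivative_eq_intros)
  then show ?thesis
    by (simp add: Lclosed'_def geom_tail_def)
qed

lemma Lclosed'_has_derivative:
  assumes "\<bar>u\<bar> < \<beta>/2"
  shows "(Lclosed' \<beta> has_real_derivative Lclosed'' \<beta> u) (at u)"
proof -
  have "u < \<beta>/2" "-u < \<beta>/2" using assms by auto
  have "((\<lambda>u. geom_tail \<beta> (-u)) has_real_derivative geom_tail' \<beta> (-u) * (-1)) (at u)"
    by (rule DERIV_chain2[OF geom_tail_has_derivative[OF \<open>-u < \<beta>/2\<close>] DERIV_minus[OF DERIV_ident]])
  from DERIV_diff[OF geom_tail_has_derivative[OF \<open>u < \<beta>/2\<close>] this]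
  show ?thesis unfolding Lclosed'_def Lclosed''_def by simp
qed

lemma Lclosed''_has_derivative:
  assumes "\<bar>u\<bar> < \<beta>/2"
  shows "(Lclosed'' \<beta> has_real_derivative Lclosed''' \<beta> u) (at u)"
proof -
  have "u < \<beta>/2" "-u < \<beta>/2" using assms by auto
  have "((\<lambda>u. geom_tail' \<beta> (-u)) has_real_derivative geom_tail'' \<beta> (-u) * (-1)) (at u)"
    by (rule DERIV_chain2[OF geom_tail'_has_derivative[OF \<open>-u < \<beta>/2\<close>] DERIV_minus[OF DERIV_ident]])
  from DERIV_add[OF geom_tail'_has_derivative[OF \<open>u < \<beta>/2\<close>] this]
  show ?thesis unfolding Lclosed''_def Lclosed'''_def by simp
qed

lemma continuous_on_Lclosed''':
  "continuous_on {u. \<bar>u\<bar> < \<beta>/2} (Lclosed''' \<beta>)"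
proof -
  have "exp (u - \<beta>/2) \<noteq> 1" "exp (-u - \<beta>/2) \<noteq> 1" if "\<bar>u\<bar> < \<beta>/2" for u
    using that by auto
  then show ?thesis
    unfolding Lclosed'''_def geom_tail''_def by (auto intro!: continuous_intros)
qed

lemma Lclosed_deriv_has_derivative:
  assumes "\<bar>u\<bar> < \<beta>/2" "n < 3"
  shows "(Lclosed_deriv \<beta> n has_real_derivative Lclosed_deriv \<beta> (Suc n) u) (at u)"
proof -
  have "n = 0 \<or> n = 1 \<or> n = 2" using assms(2) by auto
  then show ?thesis
    using Lclosed_has_derivative[OF assms(1)] Lclosed'_has_derivative[OF assms(1)]
      Lclosed''_has_derivative[OF assms(1)]
    by (auto simp: eval_nat_numeral)
qed

lemma continuous_on_Lclosed_deriv: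
  assumes "n \<le> 3"
  shows "continuous_on {u. \<bar>u\<bar> < \<beta>/2} (Lclosed_deriv \<beta> n)"
proof (cases "n = 3")
  case True
  then show ?thesis using continuous_on_Lclosed''' by simp
next
  case False
  then have "n < 3" using assms by simp
  then show ?thesis
    by (intro continuous_at_imp_continuous_on ballI DERIV_isCont) (auto intro: Lclosed_deriv_has_derivative)
qed

lemma geom_tail_pos: "u < \<beta>/2 \<Longrightarrow> 0 < geom_tail \<beta> u"
  by (simp add: geom_tail_def)

lemma geom_tail_mono:
  assumes "u \<le> v" "v < \<beta>/2"
  shows "geom_tail \<beta> u \<le> geom_tail \<beta> v"
  unfolding geom_tail_def by (rule frac_le) (use assms in auto)

lemma geom_tail_lower:
  assumes "-(\<beta>/2) \<le> u" "u < \<beta>/2"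
  shows "exp (-\<beta>) / (\<beta>/2 - u) \<le> geom_tail \<beta> u"
proof -
  define t where "t = \<beta>/2 - u"
  have t: "0 < t" "t \<le> \<beta>" using assms by (auto simp: t_def)
  have "1 + (-t) \<le> exp (-t)" by (rule exp_ge_add_one_self)
  then have "1 - exp (-t) \<le> t" by simp
  moreover have "0 < 1 - exp (-t)" using t by simp
  ultimately have "exp (-t) / t \<le> exp (-t) / (1 - exp (-t))"
    by (intro divide_left_mono) auto
  moreover have "exp (-\<beta>) / t \<le> exp (-t) / t"
    using t by (intro divide_right_mono) auto
  moreover have "exp (u - \<beta>/2) = exp (-t)"
    unfolding t_def minus_diff_eq ..
  ultimately show ?thesis
    unfolding geom_tail_def t_def[symmetric] by simp
qed

lemma Lclosed''_lower:
  assumes "\<bar>u\<bar> < \<beta>/2"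
  shows "exp (-\<beta>) \<le> Lclosed'' \<beta> u"
proof -
  define e where "e = exp (u - \<beta>/2)"
  have e: "0 < e" "e < 1" "exp (-\<beta>) \<le> e" using assms by (auto simp: e_def)
  then have "e \<le> e / (1 - e)^2" by (simp add: le_divide_eq power_le_one)
  then have "exp (-\<beta>) \<le> geom_tail' \<beta> u"
    using e by (simp add: geom_tail'_def e_def[symmetric])
  moreover have "0 < geom_tail' \<beta> (-u)"
    using assms by (simp add: geom_tail'_def)
  ultimately show ?thesis by (simp add: Lclosed''_def)
qed

lemma Lclosed_even: "Lclosed \<beta> (-u) = Lclosed \<beta> u"
  by (simp add: Lclosed_def)

lemma Lclosed'_odd: "Lclosed' \<beta> (-u) = - Lclosed' \<beta> u"
  by (simp add: Lclosed'_def)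

lemma Lclosed'_ge_linear:
  assumes "\<bar>u\<bar> < \<beta>/2" "0 \<le> u"
  shows "exp (-\<beta>) * u \<le> Lclosed' \<beta> u"
proof -
  define f where "f v = Lclosed' \<beta> v - exp (-\<beta>) * v" for v
  have "f 0 \<le> f u"
  proof (rule DERIV_nonneg_imp_nondecreasing[OF assms(2)])
    fix v assume "0 \<le> v" "v \<le> u"
    then have v: "\<bar>v\<bar> < \<beta>/2" using assms by auto
    have "(f has_real_derivative Lclosed'' \<beta> v - exp (-\<beta>) * 1) (at v)"
      unfolding f_def by (intro DERIV_diff Lclosed'_has_derivative[OF v] DERIV_cmult DERIV_ident)
    then show "\<exists>y. (f has_real_derivative y) (at v) \<and> 0 \<le> y"
      using Lclosed''_lower[OF v] by auto
  qed
  then show ?thesis by (simp add: f_def Lclosed'_def)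
qed

lemma Lclosed'_zero: "Lclosed' \<beta> 0 = 0"
  by (simp add: Lclosed'_def)

lemma Lclosed'_pos_iff:
  assumes "\<bar>u\<bar> < \<beta>/2"
  shows "0 < Lclosed' \<beta> u \<longleftrightarrow> 0 < u"
proof -
  have pos: "0 < Lclosed' \<beta> v" if "\<bar>v\<bar> < \<beta>/2" "0 < v" for v
    using Lclosed'_ge_linear[OF that(1)] that(2) mult_pos_pos[OF exp_gt_zero[of "-\<beta>"] that(2)] by linarith
  show ?thesis
  proof (cases u "0::real" rule: linorder_cases)
    case less
    then have "0 < Lclosed' \<beta> (-u)" using pos[of "-u"] assms by simp
    then show ?thesis using less Lclosed'_odd[of \<beta> u] by simp
  next
    case equal
    then show ?thesis by (simp add: Lclosed'_zero)
  next
    case greater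
    then show ?thesis using pos[OF assms] by simp
  qed
qed

lemma Lclosed'_neg_iff:
  assumes "\<bar>u\<bar> < \<beta>/2"
  shows "Lclosed' \<beta> u < 0 \<longleftrightarrow> u < 0"
  using Lclosed'_pos_iff[of "-u" \<beta>] assms Lclosed'_odd[of \<beta> u] by simp

section \<open>Integrals of L along segments\<close>

lemma has_real_derivative_integral_segment:
  fixes K K' w :: "real \<Rightarrow> real" and U V :: "real set"
  assumes KD: "\<And>t. t \<in> V \<Longrightarrow> (K has_real_derivative K' t) (at t)"
    and K'c: "continuous_on V K'" and wc: "continuous_on {0..1} w"
    and U: "open U" "convex U" "p0 \<in> U"
    and UV: "\<And>p x. p \<in> U \<Longrightarrow> x \<in> {0..1} \<Longrightarrow> p * x + c \<in> V"
  shows "((\<lambda>p. integral {0..1} (\<lambda>x. w x * K (p * x + c))) has_real_derivative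
           integral {0..1} (\<lambda>x. w x * x * K' (p0 * x + c))) (at p0)"
proof -
  have Kc: "continuous_on V K"
    using KD by (intro continuous_at_imp_continuous_on ballI DERIV_isCont) auto
  have "((\<lambda>p. integral (cbox 0 1) (\<lambda>x. w x * K (p * x + c))) has_real_derivative
           integral (cbox 0 1) (\<lambda>x. w x * x * K' (p0 * x + c))) (at p0 within U)"
  proof (rule leibniz_rule_field_derivative[where fx = "\<lambda>p x. w x * x * K' (p * x + c)"])
    fix p x assume "p \<in> U" "x \<in> cbox (0::real) 1"
    then have "p * x + c \<in> V" using UV by auto
    moreover have "((\<lambda>p. p * x + c) has_real_derivative x) (at p within U)"
      by (auto intro!: derivative_eq_intros)
    ultimately have "((\<lambda>p. K (p * x + c)) has_real_derivative K' (p * x + c) * x) (at p within U)"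
      by (rule DERIV_chain2[OF has_field_derivative_at_within[OF KD]])
    from DERIV_cmult[OF this, of "w x"]
    show "((\<lambda>p. w x * K (p * x + c)) has_real_derivative w x * x * K' (p * x + c)) (at p within U)"
      by (simp add: ac_simps)
  next
    fix p assume "p \<in> U"
    have "continuous_on {0..1} (\<lambda>x. K (p * x + c))"
      by (rule continuous_on_compose2[OF Kc]) (use UV \<open>p \<in> U\<close> in \<open>auto intro!: continuous_intros\<close>)
    then show "(\<lambda>x. w x * K (p * x + c)) integrable_on cbox 0 1"
      by (auto intro!: integrable_continuous_interval continuous_intros wc)
  next
    have "continuous_on (U \<times> {0..1}) (\<lambda>z. w (snd z))"
      by (rule continuous_on_compose2[OF wc]) (auto intro!: continuous_intros)
    moreover have "continuous_on (U \<times> {0..1}) (\<lambda>z. K' (fst z * snd z + c))"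
      by (rule continuous_on_compose2[OF K'c]) (use UV in \<open>auto intro!: continuous_intros\<close>)
    ultimately show "continuous_on (U \<times> cbox 0 1) (\<lambda>(p, x). w x * x * K' (p * x + c))"
      by (auto simp: split_beta intro!: continuous_intros)
  qed (use U in auto)
  then show ?thesis using U at_within_open[of p0 U] by simp
qed

lemma abs_add_less_iff:
  fixes s c r :: real
  shows "\<bar>s + c\<bar> < r \<longleftrightarrow> s \<in> {-r - c<..<r - c}"
  by (auto simp: abs_less_iff)

lemma abs_segment_less:
  fixes c s x R :: real
  assumes "\<bar>c\<bar> < R" "\<bar>s + c\<bar> < R" "x \<in> {0..1}"
  shows "\<bar>s * x + c\<bar> < R"
proof -
  have x: "0 \<le> x" "x \<le> 1" using assms(3) by auto
  have "\<bar>s * x + c\<bar> = \<bar>(1 - x) * c + x * (s + c)\<bar>" by (simp add: algebra_simps)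
  also have "\<dots> \<le> (1 - x) * \<bar>c\<bar> + x * \<bar>s + c\<bar>"
    using x by (auto simp: abs_mult intro: order.trans[OF abs_triangle_ineq])
  also have "\<dots> < (1 - x) * R + x * R"
  proof (cases "x = 0")
    case False
    then have "x * \<bar>s + c\<bar> < x * R" using x assms(2) by (intro mult_strict_left_mono) auto
    moreover have "(1 - x) * \<bar>c\<bar> \<le> (1 - x) * R" using x assms(1) by (intro mult_left_mono) auto
    ultimately show ?thesis by simp
  qed (use assms(1) in simp)
  finally show ?thesis by (simp add: algebra_simps)
qed

text \<open>\<open>Hderiv \<beta> c n\<close> is the \<open>n\<close>-th derivative of \<open>s \<mapsto> \<integral>\<^sub>0\<^sup>1 L(s x + c) dx\<close>, i.e. of \<open>H\<^sub>\<delta>\<close> for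
  \<open>c = \<delta> - \<beta>/2\<close>; it is meaningful only for \<open>\<bar>c\<bar> < \<beta>/2\<close> and \<open>\<bar>s + c\<bar> < \<beta>/2\<close>.\<close>

definition Hderiv :: "real \<Rightarrow> real \<Rightarrow> nat \<Rightarrow> real \<Rightarrow> real" where
  "Hderiv \<beta> c n s = integral {0..1} (\<lambda>x. x^n * Lclosed_deriv \<beta> n (s * x + c))"

lemma continuous_on_Lclosed_deriv_segment:
  assumes "\<bar>c\<bar> < \<beta>/2" "\<bar>s + c\<bar> < \<beta>/2" "n \<le> 3"
  shows "continuous_on {0..1} (\<lambda>x. Lclosed_deriv \<beta> n (s * x + c))"
  by (rule continuous_on_compose2[OF continuous_on_Lclosed_deriv[OF assms(3)]])
     (use abs_segment_less[OF assms(1,2)] in \<open>auto intro!: continuous_intros\<close>)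

lemma continuous_on_Hderiv_integrand:
  assumes "\<bar>c\<bar> < \<beta>/2" "\<bar>s + c\<bar> < \<beta>/2" "n \<le> 3"
  shows "continuous_on {0..1} (\<lambda>x. x^n * Lclosed_deriv \<beta> n (s * x + c))"
  using continuous_on_Lclosed_deriv_segment[OF assms] by (intro continuous_intros)

lemma Hderiv_has_integral:
  assumes "\<bar>c\<bar> < \<beta>/2" "\<bar>s + c\<bar> < \<beta>/2" "n \<le> 3"
  shows "((\<lambda>x. x^n * Lclosed_deriv \<beta> n (s * x + c)) has_integral Hderiv \<beta> c n s) {0..1}"
  unfolding Hderiv_def
  by (intro integrable_integral integrable_continuous_interval continuous_on_Hderiv_integrand assms)

lemma Hderiv_has_derivative:
  assumes "\<bar>c\<bar> < \<beta>/2" "\<bar>s + c\<bar> < \<beta>/2" "n < 3"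
  shows "(Hderiv \<beta> c n has_real_derivative Hderiv \<beta> c (Suc n) s) (at s)"
proof -
  have "((\<lambda>p. integral {0..1} (\<lambda>x. x^n * Lclosed_deriv \<beta> n (p * x + c))) has_real_derivative
      integral {0..1} (\<lambda>x. x^n * x * Lclosed_deriv \<beta> (Suc n) (s * x + c))) (at s)"
  proof (rule has_real_derivative_integral_segment[where V = "{u. \<bar>u\<bar> < \<beta>/2}"
        and U = "{-(\<beta>/2) - c<..<\<beta>/2 - c}"])
    show "s \<in> {-(\<beta>/2) - c<..<\<beta>/2 - c}" using assms(2) by (simp only: abs_add_less_iff)
    fix p x :: real assume "p \<in> {-(\<beta>/2) - c<..<\<beta>/2 - c}" "x \<in> {0..1}"
    then have "\<bar>p + c\<bar> < \<beta>/2" "x \<in> {0..1}" by (simp_all only: abs_add_less_iff)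
    then show "p * x + c \<in> {u. \<bar>u\<bar> < \<beta>/2}"
      using abs_segment_less[OF assms(1)] by simp
  qed (use assms continuous_on_Lclosed_deriv[of "Suc n" \<beta>]
      in \<open>auto intro!: continuous_intros Lclosed_deriv_has_derivative\<close>)
  then show ?thesis unfolding Hderiv_def power_Suc2 .
qed

lemma isCont_Hderiv:
  assumes "\<bar>c\<bar> < \<beta>/2" "\<bar>s + c\<bar> < \<beta>/2" "n < 3"
  shows "isCont (Hderiv \<beta> c n) s"
  using DERIV_isCont[OF Hderiv_has_derivative[OF assms]] .

lemma HH_eq_Hderiv:
  assumes "0 < \<delta>" "\<delta> < \<beta>" "-\<delta> < s" "s < \<beta> - \<delta>"
  shows "HH \<beta> \<delta> s = Hderiv \<beta> (\<delta> - \<beta>/2) 0 s"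
  unfolding HH_def Hderiv_def
proof (rule integral_cong)
  fix x :: real assume "x \<in> {0..1}"
  moreover have "\<bar>\<delta> - \<beta>/2\<bar> < \<beta>/2" "\<bar>s + (\<delta> - \<beta>/2)\<bar> < \<beta>/2"
    using assms by (auto simp: abs_if)
  ultimately have "\<bar>s * x + (\<delta> - \<beta>/2)\<bar> < \<beta>/2"
    by (intro abs_segment_less)
  then show "LL \<beta> (s * x + \<delta> - \<beta>/2) = x^0 * Lclosed_deriv \<beta> 0 (s * x + (\<delta> - \<beta>/2))"
    by (simp add: LL_eq_Lclosed add_diff_eq)
qed

lemma Hderiv2_lower:
  assumes "\<bar>c\<bar> < \<beta>/2" "\<bar>s + c\<bar> < \<beta>/2"
  shows "exp (-\<beta>) / 3 \<le> Hderiv \<beta> c 2 s"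
proof -
  have "((\<lambda>x::real. x^2) has_integral (1^3/3 - 0^3/3)) {0..1}"
    by (rule has_integral_01_if_deriv[of "\<lambda>x. x^3/3"]) (auto intro!: derivative_eq_intros)
  from has_integral_mult_right[OF this, of "exp (-\<beta>)"]
  have "((\<lambda>x. exp (-\<beta>) * x^2) has_integral exp (-\<beta>) / 3) {0..1}"
    by simp
  then show ?thesis
  proof (rule has_integral_le[OF _ Hderiv_has_integral[OF assms]])
    fix x :: real assume "x \<in> {0..1}"
    then have "exp (-\<beta>) \<le> Lclosed'' \<beta> (s * x + c)"
      using Lclosed''_lower abs_segment_less[OF assms] by blast
    from mult_right_mono[OF this, of "x^2"]
    show "exp (-\<beta>) * x^2 \<le> x^2 * Lclosed_deriv \<beta> 2 (s * x + c)"
      by (simp add: mult.commute)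
  qed simp
qed

lemma Hderiv2_pos:
  assumes "\<bar>c\<bar> < \<beta>/2" "\<bar>s + c\<bar> < \<beta>/2"
  shows "0 < Hderiv \<beta> c 2 s"
proof -
  have "0 < exp (-\<beta>) / 3" by simp
  with Hderiv2_lower[OF assms] show ?thesis by linarith
qed

lemma strict_mono_on_Hderiv1:
  assumes "\<bar>c\<bar> < \<beta>/2"
  shows "strict_mono_on {-(\<beta>/2) - c<..<\<beta>/2 - c} (Hderiv \<beta> c 1)"
proof (rule strict_mono_on_if_deriv_pos)
  fix s assume "s \<in> {-(\<beta>/2) - c<..<\<beta>/2 - c}"
  then have s: "\<bar>s + c\<bar> < \<beta>/2" by (simp only: abs_add_less_iff)
  show "(Hderiv \<beta> c 1 has_real_derivative Hderiv \<beta> c 2 s) (at s)"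
    using Hderiv_has_derivative[OF assms s, of 1] by (simp add: numeral_2_eq_2)
  show "0 < Hderiv \<beta> c 2 s"
    using Hderiv2_pos[OF assms s] .
qed simp

text \<open>The identity behind the sign of \<open>T''\<close>: integrate \<open>d/dx (x\<^sup>2 L'(s x + c))\<close> over \<open>[0, 1]\<close>.\<close>

lemma Hderiv_identity:
  assumes "\<bar>c\<bar> < \<beta>/2" "\<bar>s + c\<bar> < \<beta>/2"
  shows "s * Hderiv \<beta> c 2 s + 2 * Hderiv \<beta> c 1 s = Lclosed' \<beta> (s + c)"
proof -
  let ?f = "\<lambda>x. x^2 * Lclosed' \<beta> (s * x + c)"
  let ?f' = "\<lambda>x. 2 * (x^1 * Lclosed_deriv \<beta> 1 (s * x + c)) + s * (x^2 * Lclosed_deriv \<beta> 2 (s * x + c))"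
  have "(?f' has_integral (?f 1 - ?f 0)) {0..1}"
  proof (rule has_integral_01_if_deriv)
    fix x :: real assume "x \<in> {0..1}"
    have "((\<lambda>x. s * x + c) has_real_derivative s) (at x)"
      by (auto intro!: derivative_eq_intros)
    from DERIV_chain2[OF Lclosed'_has_derivative[OF abs_segment_less[OF assms \<open>x \<in> {0..1}\<close>]] this]
    have "((\<lambda>x. Lclosed' \<beta> (s * x + c)) has_real_derivative Lclosed'' \<beta> (s * x + c) * s) (at x)" .
    from DERIV_mult[OF DERIV_pow[of 2 x] this]
    show "(?f has_real_derivative ?f' x) (at x)"
      by (simp add: algebra_simps power2_eq_square)
  qed
  moreover have "(?f' has_integral (2 * Hderiv \<beta> c 1 s + s * Hderiv \<beta> c 2 s)) {0..1}"
    by (intro has_integral_add has_integral_mult_right Hderiv_has_integral assms) auto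
  ultimately have "?f 1 - ?f 0 = 2 * Hderiv \<beta> c 1 s + s * Hderiv \<beta> c 2 s"
    by (rule has_integral_unique)
  then show ?thesis by simp
qed

lemma Hderiv1_reflect: "Hderiv \<beta> c 1 (-t) = - Hderiv \<beta> (-c) 1 t"
proof -
  have "Lclosed' \<beta> (-t * x + c) = - Lclosed' \<beta> (t * x + -c)" for x
    using Lclosed'_odd[of \<beta> "t * x + -c"] by simp
  then have "(\<lambda>x. x^1 * Lclosed_deriv \<beta> 1 (-t * x + c)) = (\<lambda>x. - (x^1 * Lclosed_deriv \<beta> 1 (t * x + -c)))"
    by simp
  then show ?thesis
    unfolding Hderiv_def integral_neg by simp
qed

lemma has_integral_x_div_affine:
  fixes R s :: real
  assumes "0 < s" "s < R"
  shows "((\<lambda>x. x / (R - s * x)) has_integral (R / s^2 * ln (R / (R - s)) - 1 / s)) {0..1}"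
proof -
  let ?A = "\<lambda>x. - (R / s^2) * ln (R - s * x) - x / s"
  have I: "((\<lambda>x. x / (R - s * x)) has_integral (?A 1 - ?A 0)) {0..1}"
  proof (rule has_integral_01_if_deriv)
    fix x :: real assume "x \<in> {0..1}"
    then have "s * x \<le> s" using assms by (simp add: mult_left_le)
    then have pos: "0 < R - s * x" using assms by linarith
    have "((\<lambda>x. R - s * x) has_real_derivative - s) (at x)"
      by (auto intro!: derivative_eq_intros)
    from DERIV_chain2[OF DERIV_ln_divide[OF pos] this]
    have "((\<lambda>x. ln (R - s * x)) has_real_derivative - s / (R - s * x)) (at x)" by simp
    moreover have "((\<lambda>x. x / s) has_real_derivative 1 / s) (at x)"
      using DERIV_cdivide[OF DERIV_ident, of s x] by simp
    ultimately have "(?A has_real_derivative - (R / s^2) * (- s / (R - s * x)) - 1 / s) (at x)"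
      by (intro DERIV_diff DERIV_cmult)
    moreover have "- (R / s^2) * (- s / (R - s * x)) - 1 / s = x / (R - s * x)"
      using assms pos by (simp add: field_simps power2_eq_square)
    ultimately show "(?A has_real_derivative x / (R - s * x)) (at x)" by simp
  qed
  have eq: "?A 1 - ?A 0 = R / s^2 * ln (R / (R - s)) - 1 / s"
    using assms by (simp add: ln_div field_simps)
  show ?thesis using I unfolding eq .
qed

lemma Hderiv1_lower:
  assumes c: "\<bar>c\<bar> < \<beta>/2" and s: "0 < s" "s < \<beta>/2 - c"
  shows "exp (-\<beta>) * ((\<beta>/2 - c) / s^2 * ln ((\<beta>/2 - c) / (\<beta>/2 - c - s)) - 1 / s) - geom_tail \<beta> (-c)
    \<le> Hderiv \<beta> c 1 s"
proof -
  have sc: "\<bar>s + c\<bar> < \<beta>/2" using c s by (simp only: abs_add_less_iff) auto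
  have c': "-c < \<beta>/2" using abs_less_iff[THEN iffD1, OF c] by auto
  have "((\<lambda>x. exp (-\<beta>) * (x / (\<beta>/2 - c - s * x)) - geom_tail \<beta> (-c)) has_integral
      exp (-\<beta>) * ((\<beta>/2 - c) / s^2 * ln ((\<beta>/2 - c) / (\<beta>/2 - c - s)) - 1 / s) - geom_tail \<beta> (-c)) {0..1}"
    using has_integral_x_div_affine[of s "\<beta>/2 - c"] s has_integral_const_real[of "geom_tail \<beta> (-c)" 0 1]
    by (intro has_integral_diff has_integral_mult_right) auto
  then show ?thesis
  proof (rule has_integral_le[OF _ Hderiv_has_integral[OF c sc]])
    fix x :: real assume x: "x \<in> {0..1}"
    define u where "u = s * x + c"
    have u: "\<bar>u\<bar> < \<beta>/2" "c \<le> u" using abs_segment_less[OF c sc x] s x by (auto simp: u_def)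
    have u': "-(\<beta>/2) < u" "u < \<beta>/2"
      using abs_less_iff[THEN iffD1, OF u(1)] by auto
    have "exp (-\<beta>) / (\<beta>/2 - u) \<le> geom_tail \<beta> u" "geom_tail \<beta> (-u) \<le> geom_tail \<beta> (-c)"
      using geom_tail_lower[of \<beta> u] geom_tail_mono[of "-u" "-c" \<beta>] u(2) u' c' by auto
    then have "exp (-\<beta>) / (\<beta>/2 - u) - geom_tail \<beta> (-c) \<le> Lclosed' \<beta> u"
      unfolding Lclosed'_def by linarith
    then have "x * (exp (-\<beta>) / (\<beta>/2 - u) - geom_tail \<beta> (-c)) \<le> x * Lclosed' \<beta> u"
      using x by (intro mult_left_mono) auto
    moreover have "x * geom_tail \<beta> (-c) \<le> geom_tail \<beta> (-c)"
      using x geom_tail_pos[OF c'] by (intro mult_left_le_one_le) auto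
    ultimately show "exp (-\<beta>) * (x / (\<beta>/2 - c - s * x)) - geom_tail \<beta> (-c) \<le> x^1 * Lclosed_deriv \<beta> 1 (s * x + c)"
      by (simp add: u_def algebra_simps)
  qed simp
qed

lemma Hderiv1_unbounded:
  assumes c: "\<bar>c\<bar> < \<beta>/2"
  shows "\<exists>s. 0 < s \<and> s < \<beta>/2 - c \<and> Q \<le> Hderiv \<beta> c 1 s"
proof -
  define R where "R = \<beta>/2 - c"
  define K where "K = geom_tail \<beta> (-c)"
  define e where "e = exp (-\<beta>)"
  have c': "-(\<beta>/2) < c" "c < \<beta>/2" using abs_less_iff[THEN iffD1, OF c] by auto
  have R: "0 < R" using c' by (simp add: R_def)
  have K: "0 < K" using c' geom_tail_pos[of "-c" \<beta>] by (simp add: K_def)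
  have e: "0 < e" by (simp add: e_def)
  \<comment> \<open>Choose \<open>s\<close> with \<open>ln (R / (R - s)) = M\<close>; the bound of \<open>Hderiv1_lower\<close> grows like \<open>M\<close>.\<close>
  define M where "M = 3 + R * (\<bar>Q\<bar> + K) / e"
  define s where "s = R * (1 - exp (-M))"
  have M: "1 \<le> M" using R K e by (simp add: M_def)
  have "exp (-M) \<le> exp (-1)" using M by simp
  also have "exp (-1) \<le> (1/2 :: real)"
    using exp_ge_add_one_self[of 1] by (simp add: exp_minus field_simps)
  finally have "R * exp (-M) \<le> R * (1/2)"
    using R by (intro mult_left_mono) auto
  moreover have "0 < R * exp (-M)" using R by simp
  ultimately have s: "0 < s" "s < R" "R/2 \<le> s"
    using M by (simp_all add: s_def algebra_simps)
  have "R / (R - s) = exp M" using R by (simp add: s_def exp_minus field_simps)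
  then have lnM: "ln (R / (R - s)) = M" by simp
  have "1 / R \<le> R / s^2"
    using R s by (simp add: field_simps power2_eq_square mult_mono)
  then have "1 / R * M \<le> R / s^2 * ln (R / (R - s))"
    unfolding lnM by (rule mult_right_mono) (use M in simp)
  moreover have "1 / s \<le> 2 / R" using R s by (simp add: field_simps)
  ultimately have "e * (1 / R * M - 2 / R) \<le> e * (R / s^2 * ln (R / (R - s)) - 1 / s)"
    using e by (intro mult_left_mono) auto
  also have "\<dots> - K \<le> Hderiv \<beta> c 1 s"
    using Hderiv1_lower[OF c s(1)] s(2) by (simp add: R_def K_def e_def)
  finally have "e * (1 / R * M - 2 / R) - K \<le> Hderiv \<beta> c 1 s" by simp
  moreover have "e * (1 / R * M - 2 / R) = e / R + \<bar>Q\<bar> + K"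
    using R e by (simp add: M_def field_simps)
  moreover have "0 < e / R" using R e by simp
  ultimately have "Q \<le> Hderiv \<beta> c 1 s" by linarith
  moreover have "0 < s" "s < \<beta>/2 - c" using s by (simp_all add: R_def)
  ultimately show ?thesis by blast
qed

lemma Hderiv1_surj:
  assumes c: "\<bar>c\<bar> < \<beta>/2"
  shows "\<exists>s \<in> {-(\<beta>/2) - c<..<\<beta>/2 - c}. Hderiv \<beta> c 1 s = q"
proof -
  obtain s1 where s1: "0 < s1" "s1 < \<beta>/2 - c" "q \<le> Hderiv \<beta> c 1 s1"
    using Hderiv1_unbounded[OF c] by blast
  obtain t where t: "0 < t" "t < \<beta>/2 + c" "-q \<le> Hderiv \<beta> (-c) 1 t"
    using Hderiv1_unbounded[of "-c" \<beta> "-q"] c by auto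
  have "\<exists>s. -t \<le> s \<and> s \<le> s1 \<and> Hderiv \<beta> c 1 s = q"
  proof (rule IVT')
    show "Hderiv \<beta> c 1 (-t) \<le> q" using t(3) Hderiv1_reflect[of \<beta> c t] by linarith
    show "continuous_on {-t..s1} (Hderiv \<beta> c 1)"
    proof (intro continuous_at_imp_continuous_on ballI isCont_Hderiv c)
      fix s assume "s \<in> {-t..s1}"
      then show "\<bar>s + c\<bar> < \<beta>/2" using s1 t by (simp only: abs_add_less_iff) auto
    qed simp
  qed (use s1 t in auto)
  then show ?thesis using s1 t by force
qed

lemma Hderiv1_neg_shift_pos_iff:
  assumes c: "\<bar>c\<bar> < \<beta>/2"
  shows "0 < Hderiv \<beta> c 1 (-c) \<longleftrightarrow> 0 < c"
proof -
  have cc: "\<bar>-c + c\<bar> < \<beta>/2" using c by simp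
  have seg: "\<bar>-c * x + c\<bar> < \<beta>/2" "-c * x + c = c * (1 - x)" if "x \<in> {0..1}" for x
    using abs_segment_less[OF c cc that] by (auto simp: algebra_simps)
  show ?thesis
  proof
    assume "0 < Hderiv \<beta> c 1 (-c)"
    moreover have "Hderiv \<beta> c 1 (-c) \<le> 0" if "c \<le> 0"
    proof (rule has_integral_le[OF Hderiv_has_integral[OF c cc] has_integral_0])
      fix x :: real assume x: "x \<in> {0..1}"
      have "c * (1 - x) \<le> 0" using x that by (simp add: mult_nonpos_nonneg)
      then have "\<not> 0 < Lclosed' \<beta> (-c * x + c)"
        using Lclosed'_pos_iff[OF seg(1)[OF x]] seg(2)[OF x] by simp
      then show "x^1 * Lclosed_deriv \<beta> 1 (-c * x + c) \<le> 0"
        using x by (simp add: mult_nonneg_nonpos)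
    qed simp
    ultimately show "0 < c" by linarith
  next
    assume "0 < c"
    have "((\<lambda>x::real. x * (1 - x)) has_integral ((1^2/2 - 1^3/3) - (0^2/2 - 0^3/3))) {0..1}"
      by (rule has_integral_01_if_deriv[of "\<lambda>x. x^2/2 - x^3/3"])
         (auto intro!: derivative_eq_intros simp: algebra_simps power2_eq_square)
    from has_integral_mult_right[OF this, of "exp (-\<beta>) * c"]
    have "((\<lambda>x. exp (-\<beta>) * c * (x * (1 - x))) has_integral exp (-\<beta>) * c / 6) {0..1}"
      by simp
    then have "exp (-\<beta>) * c / 6 \<le> Hderiv \<beta> c 1 (-c)"
    proof (rule has_integral_le[OF _ Hderiv_has_integral[OF c cc]])
      fix x :: real assume x: "x \<in> {0..1}"
      then have "exp (-\<beta>) * (c * (1 - x)) \<le> Lclosed' \<beta> (-c * x + c)"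
        using Lclosed'_ge_linear[OF seg(1)[OF x]] seg(2)[OF x] \<open>0 < c\<close> by simp
      then have "x * (exp (-\<beta>) * (c * (1 - x))) \<le> x * Lclosed' \<beta> (-c * x + c)"
        using x by (intro mult_left_mono) auto
      then show "exp (-\<beta>) * c * (x * (1 - x)) \<le> x^1 * Lclosed_deriv \<beta> 1 (-c * x + c)"
        by (simp add: algebra_simps)
    qed simp
    moreover have "0 < exp (-\<beta>) * c / 6" using \<open>0 < c\<close> by simp
    ultimately show "0 < Hderiv \<beta> c 1 (-c)" by linarith
  qed
qed

section \<open>The centred integral \<open>G\<close> as a rescaled \<open>H\<close>\<close>

lemma half_abs_less:
  fixes h \<beta> :: real
  assumes "\<bar>h\<bar> < \<beta>"
  shows "\<bar>-(h/2)\<bar> < \<beta>/2" "\<bar>h + -(h/2)\<bar> < \<beta>/2"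
  using assms by auto

lemma Hderiv0_centred:
  assumes "\<bar>h\<bar> < \<beta>"
  shows "Hderiv \<beta> (-(h/2)) 0 h = Hderiv \<beta> 0 0 (h/2)"
proof -
  let ?g = "\<lambda>x. Lclosed \<beta> (h * x + -(h/2))"
  have "integral {0..1} ?g = integral {0..1} (\<lambda>t. ?g ((1 + t) / 2))"
  proof (rule integral_01_symmetric)
    show "continuous_on {0..1} ?g"
      using continuous_on_Lclosed_deriv_segment[OF half_abs_less(1,2)[OF assms], of 0] by simp
    show "?g (1 - x) = ?g x" for x
      using Lclosed_even[of \<beta> "h * x + -(h/2)"] by (simp add: algebra_simps)
  qed
  moreover have "?g ((1 + t) / 2) = Lclosed \<beta> (h/2 * t + 0)" for t
    by (simp add: algebra_simps add_divide_distrib)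
  ultimately show ?thesis by (simp add: Hderiv_def)
qed

lemma Hderiv1_centred:
  assumes "\<bar>h\<bar> < \<beta>"
  shows "Hderiv \<beta> (-(h/2)) 1 h = Hderiv \<beta> 0 1 (h/2) / 2"
proof -
  let ?L = "\<lambda>x. Lclosed' \<beta> (h * x + -(h/2))"
  have cont: "continuous_on {0..1} ?L"
    using continuous_on_Lclosed_deriv_segment[OF half_abs_less(1,2)[OF assms], of 1] by simp
  have odd: "?L (1 - x) = - ?L x" for x
    using Lclosed'_odd[of \<beta> "h * x + -(h/2)"] by (simp add: algebra_simps)
  have "Hderiv \<beta> (-(h/2)) 1 h = integral {0..1} (\<lambda>x. (x - 1/2) * ?L x + ?L x / 2)"
    unfolding Hderiv_def by (simp add: algebra_simps)
  also have "\<dots> = integral {0..1} (\<lambda>x. (x - 1/2) * ?L x) + integral {0..1} (\<lambda>x. ?L x / 2)"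
    using cont by (intro integral_add integrable_continuous_interval continuous_intros) auto
  also have "integral {0..1} (\<lambda>x. ?L x / 2) = 0"
    using cont odd by (intro integral_01_antisymmetric) (auto intro!: continuous_intros)
  also have "integral {0..1} (\<lambda>x. (x - 1/2) * ?L x) = integral {0..1} (\<lambda>t. ((1 + t) / 2 - 1/2) * ?L ((1 + t) / 2))"
    by (rule integral_01_symmetric) (use cont odd in \<open>auto intro!: continuous_intros simp: algebra_simps\<close>)
  also have "\<dots> = integral {0..1} (\<lambda>t. t^1 * Lclosed_deriv \<beta> 1 (h/2 * t + 0) / 2)"
    by (rule integral_cong) (simp add: algebra_simps add_divide_distrib)
  finally show ?thesis by (simp add: Hderiv_def)
qed

lemma GG_eq_Hderiv0:
  assumes "\<bar>h\<bar> < \<beta>"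
  shows "GG \<beta> h = Hderiv \<beta> 0 0 (h/2)"
proof -
  have "GG \<beta> h = Hderiv \<beta> (-(h/2)) 0 h"
    unfolding GG_def Hderiv_def
  proof (rule integral_cong)
    fix x :: real assume "x \<in> {0..1}"
    then have "\<bar>h * x + -(h/2)\<bar> < \<beta>/2"
      using abs_segment_less[OF half_abs_less(1,2)[OF assms]] by blast
    then show "LL \<beta> (h * (x - 1/2)) = x^0 * Lclosed_deriv \<beta> 0 (h * x + -(h/2))"
      by (simp add: LL_eq_Lclosed algebra_simps)
  qed
  then show ?thesis using Hderiv0_centred[OF assms] by simp
qed

section \<open>Legendre transform along one branch\<close>

text \<open>One branch of \<open>\<psi>\<close> and \<open>T\<^sub>\<delta>\<close> in the abstract: \<open>F\<close> plays the role of \<open>G\<close> or \<open>H\<^sub>\<delta>\<close>, and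
  \<open>k = (F')\<^sup>-\<^sup>1\<close> that of \<open>htilde\<close> or \<open>sdelta\<close>. By the envelope theorem \<open>Psi' = -k\<close>.\<close>

locale legendre_branch =
  fixes lo hi C :: real and F F' F'' k :: "real \<Rightarrow> real"
  assumes F_deriv: "\<And>p. p \<in> {lo<..<hi} \<Longrightarrow> (F has_real_derivative F' p) (at p)"
    and F'_deriv: "\<And>p. p \<in> {lo<..<hi} \<Longrightarrow> (F' has_real_derivative F'' p) (at p)"
    and F''_cont: "continuous_on {lo<..<hi} F''"
    and F''_pos: "\<And>p. p \<in> {lo<..<hi} \<Longrightarrow> 0 < F'' p"
    and k: "\<And>q. 0 < q \<Longrightarrow> k q \<in> {lo<..<hi} \<and> F' (k q) = q"
begin

definition Psi :: "real \<Rightarrow> real" where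
  "Psi q = F (k q) - q * k q"

definition T :: "real \<Rightarrow> real" where
  "T a = a * C + a * Psi (1/a^2)"

definition T' :: "real \<Rightarrow> real" where
  "T' a = C + Psi (1/a^2) + 2 * k (1/a^2) * (1/a^2)"

definition T'' :: "real \<Rightarrow> real" where
  "T'' a = -2/a^3 * (k (1/a^2) + 2 * (1/a^2) / F'' (k (1/a^2)))"

lemma strict_mono_F': "strict_mono_on {lo<..<hi} F'"
  using F'_deriv F''_pos by (intro strict_mono_on_if_deriv_pos) auto

lemma k_F':
  assumes "z \<in> {lo<..<hi}" "0 < F' z"
  shows "k (F' z) = z"
  using k[OF assms(2)] strict_mono_on_eqD[OF strict_mono_F'] assms(1) by metis

lemma isCont_k:
  assumes q: "0 < q"
  shows "isCont k q"
proof -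
  let ?x = "k q"
  have x: "?x \<in> {lo<..<hi}" "F' ?x = q" using k[OF q] by auto
  have F'c: "isCont F' z" if "z \<in> {lo<..<hi}" for z using F'_deriv[OF that] DERIV_isCont by blast
  then have "open ({lo<..<hi} \<inter> F' -` {0<..})"
    by (intro continuous_open_preimage continuous_at_imp_continuous_on) auto
  moreover have "?x \<in> {lo<..<hi} \<inter> F' -` {0<..}" using x q by auto
  ultimately obtain e where e: "e > 0" "ball ?x e \<subseteq> {lo<..<hi} \<inter> F' -` {0<..}"
    using open_contains_ball by blast
  have near: "z \<in> {lo<..<hi} \<and> 0 < F' z" if "\<bar>z - ?x\<bar> \<le> e/2" for z
  proof -
    have "z \<in> ball ?x e" using that e(1) by (simp add: dist_real_def abs_minus_commute)
    then show ?thesis using e(2) by auto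
  qed
  have "isCont k (F' ?x)"
    by (rule isCont_inverse_function[where d = "e/2"]) (use e near k_F' F'c in auto)
  then show ?thesis using x by simp
qed

lemma k_has_derivative:
  assumes q: "0 < q"
  shows "(k has_real_derivative 1 / F'' (k q)) (at q)"
proof -
  have x: "k q \<in> {lo<..<hi}" "F' (k q) = q" using k[OF q] by auto
  have "(k has_real_derivative inverse (F'' (k q))) (at q)"
  proof (rule DERIV_inverse_function[where f = F' and a = 0 and b = "q + 1"])
    show "(F' has_real_derivative F'' (k q)) (at (k q))" using F'_deriv x by auto
    show "F'' (k q) \<noteq> 0" using F''_pos x by (metis less_irrefl)
  qed (use q k isCont_k[OF q] in auto)
  then show ?thesis by (simp add: divide_inverse)
qed

lemma Psi_has_derivative:
  assumes q: "0 < q"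
  shows "(Psi has_real_derivative - k q) (at q)"
proof -
  have x: "k q \<in> {lo<..<hi}" "F' (k q) = q" using k[OF q] by auto
  have "((\<lambda>q. F (k q)) has_real_derivative F' (k q) * (1 / F'' (k q))) (at q)"
    by (rule DERIV_chain2[OF F_deriv[OF x(1)] k_has_derivative[OF q]])
  moreover have "((\<lambda>q. q * k q) has_real_derivative q * (1 / F'' (k q)) + 1 * k q) (at q)"
    by (rule DERIV_mult'[OF DERIV_ident k_has_derivative[OF q]])
  ultimately have "(Psi has_real_derivative F' (k q) * (1 / F'' (k q)) - (q * (1 / F'' (k q)) + 1 * k q)) (at q)"
    unfolding Psi_def by (rule DERIV_diff)
  then show ?thesis using x by simp
qed

lemma T_has_derivative:
  assumes a: "0 < a"
  shows "(T has_real_derivative T' a) (at a)"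
proof -
  have "((\<lambda>a. Psi (1/a^2)) has_real_derivative (- k (1/a^2)) * (-2/a^3)) (at a)"
    using a by (intro DERIV_chain2[OF Psi_has_derivative inverse_square_has_derivative]) auto
  then show ?thesis
    unfolding T_def
    by (rule DERIV_cong[OF DERIV_add[OF DERIV_cmult_right[OF DERIV_ident] DERIV_mult'[OF DERIV_ident]]])
       (use a in \<open>simp add: T'_def field_simps power2_eq_square power3_eq_cube\<close>)
qed

lemma T'_has_derivative:
  assumes a: "0 < a"
  shows "(T' has_real_derivative T'' a) (at a)"
proof -
  have q: "0 < 1/a^2" using a by simp
  have "((\<lambda>a. Psi (1/a^2)) has_real_derivative (- k (1/a^2)) * (-2/a^3)) (at a)"
    by (rule DERIV_chain2[OF Psi_has_derivative[OF q] inverse_square_has_derivative[OF a]])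
  moreover have "((\<lambda>a. k (1/a^2)) has_real_derivative (1 / F'' (k (1/a^2))) * (-2/a^3)) (at a)"
    by (rule DERIV_chain2[OF k_has_derivative[OF q] inverse_square_has_derivative[OF a]])
  ultimately show ?thesis
    unfolding T'_def
    apply (rule DERIV_cong[OF DERIV_add[OF DERIV_add[OF DERIV_const] DERIV_mult'[OF DERIV_cmult]]])
     apply (rule inverse_square_has_derivative[OF a])
    using a by (simp add: T''_def field_simps power2_eq_square power3_eq_cube)
qed

lemma continuous_on_T'': "continuous_on {0<..} T''"
proof (intro continuous_at_imp_continuous_on ballI)
  fix a :: real assume "a \<in> {0<..}"
  then have a: "0 < a" and q: "0 < 1/a^2" by auto
  have x: "k (1/a^2) \<in> {lo<..<hi}" using k[OF q] by auto
  have ik: "isCont (\<lambda>a. 1/a^2) a" using inverse_square_has_derivative[OF a] DERIV_isCont by blast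
  have kk: "isCont (\<lambda>a. k (1/a^2)) a"
    by (rule continuous_at_compose[OF ik isCont_k[OF q], unfolded o_def])
  have "isCont F'' (k (1/a^2))"
    using F''_cont x by (simp add: continuous_on_eq_continuous_at)
  then have "isCont (\<lambda>a. F'' (k (1/a^2))) a"
    by (rule continuous_at_compose[OF kk, unfolded o_def])
  moreover have "F'' (k (1/a^2)) \<noteq> 0" using F''_pos x by (metis less_irrefl)
  ultimately show "isCont T'' a"
    unfolding T''_def using a by (intro continuous_intros kk ik) auto
qed

end

section \<open>The two branches of \<open>T\<close>\<close>

lemma Hderiv1_zero: "Hderiv \<beta> 0 1 0 = 0"
  by (simp add: Hderiv_def Lclosed'_def)

lemma Hderiv_half_has_derivative:
  assumes "\<bar>h\<bar> < \<beta>" "n < 3"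
  shows "((\<lambda>h. Hderiv \<beta> 0 n (h/2)) has_real_derivative Hderiv \<beta> 0 (Suc n) (h/2) / 2) (at h)"
proof -
  have "(Hderiv \<beta> 0 n has_real_derivative Hderiv \<beta> 0 (Suc n) (h/2)) (at (h/2))"
    using Hderiv_has_derivative[of 0 \<beta> "h/2" n] assms by auto
  moreover have "((\<lambda>h. h/2) has_real_derivative 1/2) (at h)"
    by (auto intro!: derivative_eq_intros)
  ultimately show ?thesis
    using DERIV_chain2 by fastforce
qed

lemma deriv_GG:
  assumes "\<bar>h\<bar> < \<beta>"
  shows "deriv (GG \<beta>) h = Hderiv \<beta> 0 1 (h/2) / 2"
proof (rule DERIV_imp_deriv)
  have "((\<lambda>h. Hderiv \<beta> 0 0 (h/2)) has_real_derivative Hderiv \<beta> 0 1 (h/2) / 2) (at h)"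
    using Hderiv_half_has_derivative[OF assms, of 0] by simp
  then show "(GG \<beta> has_real_derivative Hderiv \<beta> 0 1 (h/2) / 2) (at h)"
    by (rule has_field_derivative_transform_within_open[where S = "{-\<beta><..<\<beta>}"])
       (use assms GG_eq_Hderiv0 in \<open>auto simp: abs_less_iff\<close>)
qed

lemma htilde_eqI:
  assumes "0 \<le> h" "h < \<beta>" "Hderiv \<beta> 0 1 (h/2) / 2 = q"
  shows "htilde \<beta> q = h"
  unfolding htilde_def
proof (rule the_equality)
  show "0 \<le> h \<and> h < \<beta> \<and> deriv (GG \<beta>) h = q" using assms deriv_GG[of h \<beta>] by simp
  fix h' assume h': "0 \<le> h' \<and> h' < \<beta> \<and> deriv (GG \<beta>) h' = q"
  then have "Hderiv \<beta> 0 1 (h'/2) = Hderiv \<beta> 0 1 (h/2)" using assms deriv_GG[of h' \<beta>] by simp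
  then show "h' = h"
    using strict_mono_on_eqD[OF strict_mono_on_Hderiv1[of 0 \<beta>]] assms h' by force
qed

lemma htilde:
  assumes "0 < \<beta>" "0 < q"
  shows "0 < htilde \<beta> q" "htilde \<beta> q < \<beta>" "Hderiv \<beta> 0 1 (htilde \<beta> q / 2) / 2 = q"
proof -
  obtain s where s: "s \<in> {-(\<beta>/2)<..<\<beta>/2}" "Hderiv \<beta> 0 1 s = 2 * q"
    using Hderiv1_surj[of 0 \<beta> "2 * q"] assms(1) by auto
  have "0 < s"
    using strict_mono_on_less[OF strict_mono_on_Hderiv1[of 0 \<beta>], of 0 s] s assms Hderiv1_zero[of \<beta>]
    by auto
  then have "htilde \<beta> q = 2 * s" using s by (intro htilde_eqI) auto
  then show "0 < htilde \<beta> q" "htilde \<beta> q < \<beta>" "Hderiv \<beta> 0 1 (htilde \<beta> q / 2) / 2 = q"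
    using s \<open>0 < s\<close> by auto
qed

lemma sdelta_domain_iff:
  fixes s \<beta> \<delta> :: real
  shows "\<bar>s + (\<delta> - \<beta>/2)\<bar> < \<beta>/2 \<longleftrightarrow> s \<in> {-\<delta><..<\<beta> - \<delta>}"
  by (auto simp: abs_if)

lemma sdelta_eqI:
  assumes "0 < \<delta>" "\<delta> < \<beta>" "s \<in> {-\<delta><..<\<beta> - \<delta>}" "Hderiv \<beta> (\<delta> - \<beta>/2) 1 s = q"
  shows "sdelta \<beta> \<delta> q = s"
proof -
  have c: "\<bar>\<delta> - \<beta>/2\<bar> < \<beta>/2" using assms(1,2) by (auto simp: abs_if)
  have deriv_HH: "deriv (HH \<beta> \<delta>) p = Hderiv \<beta> (\<delta> - \<beta>/2) 1 p" if p: "p \<in> {-\<delta><..<\<beta> - \<delta>}" for p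
  proof (rule DERIV_imp_deriv)
    have "(Hderiv \<beta> (\<delta> - \<beta>/2) 0 has_real_derivative Hderiv \<beta> (\<delta> - \<beta>/2) 1 p) (at p)"
      using Hderiv_has_derivative[OF c sdelta_domain_iff[THEN iffD2, OF p], of 0] by simp
    then show "(HH \<beta> \<delta> has_real_derivative Hderiv \<beta> (\<delta> - \<beta>/2) 1 p) (at p)"
    proof (rule has_field_derivative_transform_within_open[where S = "{-\<delta><..<\<beta> - \<delta>}"])
      fix x assume "x \<in> {-\<delta><..<\<beta> - \<delta>}"
      then show "Hderiv \<beta> (\<delta> - \<beta>/2) 0 x = HH \<beta> \<delta> x"
        using HH_eq_Hderiv[OF assms(1,2)] by simp
    qed (use p in auto)
  qed
  have inj: "inj_on (Hderiv \<beta> (\<delta> - \<beta>/2) 1) {-\<delta><..<\<beta> - \<delta>}"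
    using strict_mono_on_imp_inj_on[OF strict_mono_on_Hderiv1[OF c]] by simp
  show ?thesis
    unfolding sdelta_def
  proof (rule the_equality)
    show "-\<delta> < s \<and> s < \<beta> - \<delta> \<and> deriv (HH \<beta> \<delta>) s = q"
      using assms(3,4) deriv_HH[OF assms(3)] by simp
    fix s' assume s': "-\<delta> < s' \<and> s' < \<beta> - \<delta> \<and> deriv (HH \<beta> \<delta>) s' = q"
    then have "s' \<in> {-\<delta><..<\<beta> - \<delta>}" by simp
    with s' assms(3,4) deriv_HH show "s' = s"
      using inj_onD[OF inj] by metis
  qed
qed

lemma sdelta:
  assumes "0 < \<delta>" "\<delta> < \<beta>"
  shows "sdelta \<beta> \<delta> q \<in> {-\<delta><..<\<beta> - \<delta>}" "Hderiv \<beta> (\<delta> - \<beta>/2) 1 (sdelta \<beta> \<delta> q) = q"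
proof -
  have c: "\<bar>\<delta> - \<beta>/2\<bar> < \<beta>/2" using assms by (auto simp: abs_if)
  obtain s where s: "s \<in> {-(\<beta>/2) - (\<delta> - \<beta>/2)<..<\<beta>/2 - (\<delta> - \<beta>/2)}" "Hderiv \<beta> (\<delta> - \<beta>/2) 1 s = q"
    using Hderiv1_surj[OF c] by blast
  then have "s \<in> {-\<delta><..<\<beta> - \<delta>}" by auto
  with sdelta_eqI[OF assms this s(2)] s(2)
  show "sdelta \<beta> \<delta> q \<in> {-\<delta><..<\<beta> - \<delta>}" "Hderiv \<beta> (\<delta> - \<beta>/2) 1 (sdelta \<beta> \<delta> q) = q"
    by auto
qed

locale beta_delta =
  fixes \<beta> \<delta> :: real
  assumes delta_pos: "0 < \<delta>" and delta_less: "\<delta> < \<beta>"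
begin

lemma beta_pos: "0 < \<beta>"
  using delta_pos delta_less by simp

lemma abs_shift_less: "\<bar>\<delta> - \<beta>/2\<bar> < \<beta>/2"
  using delta_pos delta_less by (auto simp: abs_if)

end

sublocale beta_delta \<subseteq> G: legendre_branch "-\<beta>" \<beta> "ln (Gamma \<beta>)"
  "\<lambda>h. Hderiv \<beta> 0 0 (h/2)" "\<lambda>h. Hderiv \<beta> 0 1 (h/2) / 2" "\<lambda>h. Hderiv \<beta> 0 2 (h/2) / 4" "htilde \<beta>"
proof
  fix p assume "p \<in> {-\<beta><..<\<beta>}"
  then have p: "\<bar>p\<bar> < \<beta>" "\<bar>p/2\<bar> < \<beta>/2" by auto
  show "((\<lambda>h. Hderiv \<beta> 0 0 (h/2)) has_real_derivative Hderiv \<beta> 0 1 (p/2) / 2) (at p)"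
    using Hderiv_half_has_derivative[OF p(1), of 0] by simp
  show "((\<lambda>h. Hderiv \<beta> 0 1 (h/2) / 2) has_real_derivative Hderiv \<beta> 0 2 (p/2) / 4) (at p)"
    using DERIV_cdivide[OF Hderiv_half_has_derivative[OF p(1), of 1], of 2] by (simp add: numeral_2_eq_2)
  show "0 < Hderiv \<beta> 0 2 (p/2) / 4"
    using Hderiv2_pos[of 0 \<beta> "p/2"] p by simp
next
  have "isCont (\<lambda>h. Hderiv \<beta> 0 2 (h/2) / 4) p" if "p \<in> {-\<beta><..<\<beta>}" for p
  proof -
    have "\<bar>p\<bar> < \<beta>" using that by auto
    from DERIV_cdivide[OF Hderiv_half_has_derivative[OF this, of 2], of 4]
    show ?thesis by (rule DERIV_isCont) simp
  qed
  then show "continuous_on {-\<beta><..<\<beta>} (\<lambda>h. Hderiv \<beta> 0 2 (h/2) / 4)"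
    by (intro continuous_at_imp_continuous_on) auto
next
  fix q :: real assume "0 < q"
  then show "htilde \<beta> q \<in> {-\<beta><..<\<beta>} \<and> Hderiv \<beta> 0 1 (htilde \<beta> q / 2) / 2 = q"
    using htilde[OF beta_pos \<open>0 < q\<close>] by auto
qed

sublocale beta_delta \<subseteq> H: legendre_branch "-\<delta>" "\<beta> - \<delta>" "ln (Gamma \<beta>)"
  "Hderiv \<beta> (\<delta> - \<beta>/2) 0" "Hderiv \<beta> (\<delta> - \<beta>/2) 1" "Hderiv \<beta> (\<delta> - \<beta>/2) 2" "sdelta \<beta> \<delta>"
proof
  fix p assume "p \<in> {-\<delta><..<\<beta> - \<delta>}"
  then have p: "\<bar>p + (\<delta> - \<beta>/2)\<bar> < \<beta>/2" by (rule sdelta_domain_iff[THEN iffD2])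
  show "(Hderiv \<beta> (\<delta> - \<beta>/2) 0 has_real_derivative Hderiv \<beta> (\<delta> - \<beta>/2) 1 p) (at p)"
    using Hderiv_has_derivative[OF abs_shift_less p, of 0] by simp
  show "(Hderiv \<beta> (\<delta> - \<beta>/2) 1 has_real_derivative Hderiv \<beta> (\<delta> - \<beta>/2) 2 p) (at p)"
    using Hderiv_has_derivative[OF abs_shift_less p, of 1] by (simp add: numeral_2_eq_2)
  show "0 < Hderiv \<beta> (\<delta> - \<beta>/2) 2 p"
    using Hderiv2_pos[OF abs_shift_less p] .
next
  show "continuous_on {-\<delta><..<\<beta> - \<delta>} (Hderiv \<beta> (\<delta> - \<beta>/2) 2)"
    using abs_shift_less sdelta_domain_iff[THEN iffD2]
    by (intro continuous_at_imp_continuous_on ballI isCont_Hderiv) auto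
next
  fix q :: real
  show "sdelta \<beta> \<delta> q \<in> {-\<delta><..<\<beta> - \<delta>} \<and> Hderiv \<beta> (\<delta> - \<beta>/2) 1 (sdelta \<beta> \<delta> q) = q"
    using sdelta[OF delta_pos delta_less] by simp
qed

lemma less_inverse_sqrt_iff:
  fixes a q :: real
  assumes "0 < a" "0 < q"
  shows "a < 1 / sqrt q \<longleftrightarrow> q < 1 / a^2" "1 / sqrt q < a \<longleftrightarrow> 1 / a^2 < q"
proof -
  have "a * sqrt q = sqrt (a^2 * q)" using assms by (simp add: real_sqrt_mult)
  then have "a < 1 / sqrt q \<longleftrightarrow> a^2 * q < 1" "1 / sqrt q < a \<longleftrightarrow> 1 < a^2 * q"
    using assms by (simp_all add: pos_less_divide_eq divide_less_eq)
  then show "a < 1 / sqrt q \<longleftrightarrow> q < 1 / a^2" "1 / sqrt q < a \<longleftrightarrow> 1 / a^2 < q"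
    using assms by (simp_all add: pos_less_divide_eq divide_less_eq mult.commute)
qed

context beta_delta
begin

lemma TT_eq_G_T:
  assumes "0 < a" "\<delta> \<le> delta0 \<beta> (1/a^2)"
  shows "TT \<beta> \<delta> a = G.T a"
proof -
  have "\<bar>htilde \<beta> (1/a^2)\<bar> < \<beta>" using G.k[of "1/a^2"] assms(1) by auto
  from GG_eq_Hderiv0[OF this] have "psi \<beta> (1/a^2) \<delta> = G.Psi (1/a^2)"
    using assms(2) delta_pos by (simp add: psi_def G.Psi_def)
  then show ?thesis by (simp add: TT_def G.T_def)
qed

lemma TT_eq_H_T:
  assumes "0 < a" "\<not> \<delta> \<le> delta0 \<beta> (1/a^2)"
  shows "TT \<beta> \<delta> a = H.T a"
proof -
  have "sdelta \<beta> \<delta> (1/a^2) \<in> {-\<delta><..<\<beta> - \<delta>}" using H.k[of "1/a^2"] assms(1) by simp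
  then have "HH \<beta> \<delta> (sdelta \<beta> \<delta> (1/a^2)) = Hderiv \<beta> (\<delta> - \<beta>/2) 0 (sdelta \<beta> \<delta> (1/a^2))"
    using HH_eq_Hderiv[OF delta_pos delta_less] by simp
  then have "psi \<beta> (1/a^2) \<delta> = H.Psi (1/a^2)"
    using assms(2) by (simp add: psi_def H.Psi_def)
  then show ?thesis by (simp add: TT_def H.T_def)
qed

lemma TT_eq_H_T_large:
  assumes "\<beta>/2 \<le> \<delta>" "0 < a"
  shows "TT \<beta> \<delta> a = H.T a"
proof (rule TT_eq_H_T[OF assms(2)])
  have "0 < htilde \<beta> (1/a^2)" using htilde[OF beta_pos] assms(2) by simp
  then show "\<not> \<delta> \<le> delta0 \<beta> (1/a^2)" using assms(1) by (simp add: delta0_def)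
qed

text \<open>For \<open>\<delta> < \<beta>/2\<close> the two branches meet at \<open>q = q_junction\<close>, where
  \<open>htilde\<close> and \<open>sdelta\<close> both equal \<open>\<beta> - 2\<delta>\<close>.\<close>

definition q_junction :: real where
  "q_junction = Hderiv \<beta> 0 1 ((\<beta> - 2 * \<delta>) / 2) / 2"

lemma q_junction_pos:
  assumes "\<delta> < \<beta>/2"
  shows "0 < q_junction"
  using strict_mono_onD[OF strict_mono_on_Hderiv1[of 0 \<beta>], of 0 "(\<beta> - 2 * \<delta>) / 2"] assms delta_pos
    Hderiv1_zero[of \<beta>]
  by (simp add: q_junction_def)

lemma delta0_le_iff:
  assumes "\<delta> < \<beta>/2" "0 < q"
  shows "\<delta> \<le> delta0 \<beta> q \<longleftrightarrow> q \<le> q_junction"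
proof -
  have "\<delta> \<le> delta0 \<beta> q \<longleftrightarrow> htilde \<beta> q \<le> \<beta> - 2 * \<delta>"
    unfolding delta0_def by linarith
  also have "\<dots> \<longleftrightarrow> Hderiv \<beta> 0 1 (htilde \<beta> q / 2) / 2 \<le> q_junction"
    using strict_mono_on_less_eq[OF G.strict_mono_F', of "htilde \<beta> q" "\<beta> - 2 * \<delta>"] G.k[OF assms(2)]
      assms delta_pos
    by (simp add: q_junction_def)
  also have "Hderiv \<beta> 0 1 (htilde \<beta> q / 2) / 2 = q" using G.k[OF assms(2)] by simp
  finally show ?thesis .
qed

lemma qdelta_eq:
  assumes "\<delta> < \<beta>/2"
  shows "qdelta \<beta> \<delta> = q_junction"
proof -
  have "{q. 0 < q \<and> delta0 \<beta> q < \<delta>} = {q_junction<..}"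
    using delta0_le_iff[OF assms] q_junction_pos[OF assms] by (force simp: not_le[symmetric])
  then show ?thesis by (simp add: qdelta_def)
qed

lemma TT_eq_glued:
  assumes "\<delta> < \<beta>/2" "0 < a"
  shows "TT \<beta> \<delta> a = (if a < 1 / sqrt q_junction then H.T a else G.T a)"
proof -
  have "a < 1 / sqrt q_junction \<longleftrightarrow> \<not> \<delta> \<le> delta0 \<beta> (1/a^2)"
    using less_inverse_sqrt_iff(1)[OF assms(2) q_junction_pos[OF assms(1)]] delta0_le_iff[OF assms(1)] assms(2)
    by auto
  then show ?thesis using TT_eq_G_T[OF assms(2)] TT_eq_H_T[OF assms(2)] by auto
qed

lemma junction:
  assumes "\<delta> < \<beta>/2"
  defines "a0 \<equiv> 1 / sqrt q_junction"
  shows "G.T a0 = H.T a0" "G.T' a0 = H.T' a0"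
proof -
  define m where "m = \<beta> - 2 * \<delta>"
  have m: "0 < m" "m < \<beta>" using assms delta_pos by (simp_all add: m_def)
  have c: "\<delta> - \<beta>/2 = -(m/2)" "\<beta>/2 - \<delta> = m/2" by (simp_all add: m_def field_simps)
  have q: "1/a0^2 = q_junction"
    using q_junction_pos[OF assms(1)] by (simp add: a0_def power_one_over)
  have ht: "htilde \<beta> q_junction = m"
    using m by (intro htilde_eqI) (auto simp: q_junction_def m_def)
  have sd: "sdelta \<beta> \<delta> q_junction = m"
    using m c Hderiv1_centred[of m \<beta>] by (intro sdelta_eqI delta_pos delta_less) (auto simp: q_junction_def m_def)
  have "G.Psi q_junction = H.Psi q_junction"
    using Hderiv0_centred[of m \<beta>] m unfolding G.Psi_def H.Psi_def ht sd by (simp add: c(1))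
  then show "G.T a0 = H.T a0" "G.T' a0 = H.T' a0"
    by (simp_all add: G.T_def H.T_def G.T'_def H.T'_def q ht sd)
qed

lemma G_T''_neg:
  assumes "0 < a"
  shows "G.T'' a < 0"
proof -
  let ?h = "htilde \<beta> (1/a^2)"
  have "0 < ?h" using htilde[OF beta_pos] assms by simp
  moreover have "0 < Hderiv \<beta> 0 2 (?h / 2) / 4" using G.F''_pos G.k assms by simp
  ultimately have "0 < ?h + 2 * (1/a^2) / (Hderiv \<beta> 0 2 (?h / 2) / 4)"
    using assms by (intro add_pos_pos divide_pos_pos) auto
  moreover have "-2/a^3 < 0" using assms by simp
  ultimately show ?thesis
    unfolding G.T''_def by (simp add: mult_neg_pos)
qed

lemma H_T''_eq:
  assumes "0 < a"
  defines "s \<equiv> sdelta \<beta> \<delta> (1/a^2)"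
  shows "H.T'' a = -2/a^3 * (Lclosed' \<beta> (s + (\<delta> - \<beta>/2)) / Hderiv \<beta> (\<delta> - \<beta>/2) 2 s)"
proof -
  have s: "\<bar>s + (\<delta> - \<beta>/2)\<bar> < \<beta>/2" "Hderiv \<beta> (\<delta> - \<beta>/2) 1 s = 1/a^2"
    using sdelta[OF delta_pos delta_less] sdelta_domain_iff[THEN iffD2] by (auto simp: s_def)
  have "0 < Hderiv \<beta> (\<delta> - \<beta>/2) 2 s" by (rule Hderiv2_pos[OF abs_shift_less s(1)])
  then have "s + 2 * (1/a^2) / Hderiv \<beta> (\<delta> - \<beta>/2) 2 s
      = Lclosed' \<beta> (s + (\<delta> - \<beta>/2)) / Hderiv \<beta> (\<delta> - \<beta>/2) 2 s"
    using Hderiv_identity[OF abs_shift_less s(1)] s(2) by (simp add: field_simps)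
  then show ?thesis
    unfolding H.T''_def s_def by simp
qed

lemma H_T''_sign:
  assumes "0 < a"
  shows "H.T'' a < 0 \<longleftrightarrow> 0 < sdelta \<beta> \<delta> (1/a^2) + (\<delta> - \<beta>/2)"
    and "0 < H.T'' a \<longleftrightarrow> sdelta \<beta> \<delta> (1/a^2) + (\<delta> - \<beta>/2) < 0"
proof -
  define u where "u = sdelta \<beta> \<delta> (1/a^2) + (\<delta> - \<beta>/2)"
  define D where "D = Hderiv \<beta> (\<delta> - \<beta>/2) 2 (sdelta \<beta> \<delta> (1/a^2))"
  define K where "K = -2/a^3"
  have u: "\<bar>u\<bar> < \<beta>/2"
    using sdelta[OF delta_pos delta_less] sdelta_domain_iff[THEN iffD2] by (simp add: u_def)
  have "0 < D" unfolding D_def using Hderiv2_pos[OF abs_shift_less] u by (simp add: u_def)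
  moreover have "K < 0" using assms by (simp add: K_def)
  moreover have T: "H.T'' a = K * (Lclosed' \<beta> u / D)"
    using H_T''_eq[OF assms] by (simp add: K_def u_def D_def)
  ultimately show "H.T'' a < 0 \<longleftrightarrow> 0 < u" "0 < H.T'' a \<longleftrightarrow> u < 0"
    using Lclosed'_pos_iff[OF u] Lclosed'_neg_iff[OF u]
    by (auto simp: mult_less_0_iff zero_less_mult_iff zero_less_divide_iff divide_less_0_iff)
qed

lemma sdelta_shift_le_iff:
  "0 \<le> sdelta \<beta> \<delta> q + (\<delta> - \<beta>/2) \<longleftrightarrow> Hderiv \<beta> (\<delta> - \<beta>/2) 1 (-(\<delta> - \<beta>/2)) \<le> q"
  "0 < sdelta \<beta> \<delta> q + (\<delta> - \<beta>/2) \<longleftrightarrow> Hderiv \<beta> (\<delta> - \<beta>/2) 1 (-(\<delta> - \<beta>/2)) < q"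
proof -
  let ?c = "\<delta> - \<beta>/2" and ?s = "sdelta \<beta> \<delta> q"
  have mono: "strict_mono_on {-(\<beta>/2) - ?c<..<\<beta>/2 - ?c} (Hderiv \<beta> ?c 1)"
    by (rule strict_mono_on_Hderiv1[OF abs_shift_less])
  have dom: "?s \<in> {-(\<beta>/2) - ?c<..<\<beta>/2 - ?c}" "-?c \<in> {-(\<beta>/2) - ?c<..<\<beta>/2 - ?c}"
    using sdelta[OF delta_pos delta_less, of q] beta_pos by auto
  have q: "Hderiv \<beta> ?c 1 ?s = q" using sdelta[OF delta_pos delta_less] by simp
  show "0 \<le> ?s + ?c \<longleftrightarrow> Hderiv \<beta> ?c 1 (-?c) \<le> q"
    using strict_mono_on_less_eq[OF mono dom(2,1)] q by linarith
  show "0 < ?s + ?c \<longleftrightarrow> Hderiv \<beta> ?c 1 (-?c) < q"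
    using strict_mono_on_less[OF mono dom(2,1)] q by linarith
qed

lemma qstar_small:
  assumes "\<delta> \<le> \<beta>/2"
  shows "qstar \<beta> \<delta> = 0"
proof -
  have "\<not> 0 < Hderiv \<beta> (\<delta> - \<beta>/2) 1 (-(\<delta> - \<beta>/2))"
    using Hderiv1_neg_shift_pos_iff[OF abs_shift_less] assms by simp
  then have "{q. 0 < q \<and> 0 \<le> \<delta> - \<beta>/2 + sdelta \<beta> \<delta> q} = {0<..}"
    using sdelta_shift_le_iff(1) by (force simp: add.commute)
  then show ?thesis by (simp add: qstar_def)
qed

lemma qstar_large:
  assumes "\<beta>/2 < \<delta>"
  shows "qstar \<beta> \<delta> = Hderiv \<beta> (\<delta> - \<beta>/2) 1 (-(\<delta> - \<beta>/2))" "0 < qstar \<beta> \<delta>"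
proof -
  let ?q = "Hderiv \<beta> (\<delta> - \<beta>/2) 1 (-(\<delta> - \<beta>/2))"
  have pos: "0 < ?q" using Hderiv1_neg_shift_pos_iff[OF abs_shift_less] assms by simp
  then have "{q. 0 < q \<and> 0 \<le> \<delta> - \<beta>/2 + sdelta \<beta> \<delta> q} = {?q..}"
    using sdelta_shift_le_iff(1) by (force simp: add.commute)
  then show "qstar \<beta> \<delta> = ?q" by (simp add: qstar_def)
  with pos show "0 < qstar \<beta> \<delta>" by simp
qed

end

section \<open>Regularity and convexity of \<open>T\<close>\<close>

context beta_delta
begin

lemma TT_has_derivative_large:
  assumes "\<beta>/2 \<le> \<delta>" "0 < a"
  shows "(TT \<beta> \<delta> has_real_derivative H.T' a) (at a)"
  by (rule has_field_derivative_transform_within_open[OF H.T_has_derivative[OF assms(2)], where S = "{0<..}"])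
     (use assms TT_eq_H_T_large in auto)

definition T'_glued :: "real \<Rightarrow> real" where
  "T'_glued a = (if a \<le> 1 / sqrt q_junction then H.T' a else G.T' a)"

lemma TT_has_derivative_small:
  assumes "\<delta> < \<beta>/2" "0 < a"
  shows "(TT \<beta> \<delta> has_real_derivative T'_glued a) (at a)"
proof -
  define a0 where "a0 = 1 / sqrt q_junction"
  have a0: "0 < a0" using q_junction_pos[OF assms(1)] by (simp add: a0_def)
  note J = junction[OF assms(1), folded a0_def]
  let ?F = "\<lambda>a. if a < a0 then H.T a else G.T a"
  have F: "(?F has_real_derivative T'_glued a) (at a)"
  proof (cases a a0 rule: linorder_cases)
    case less
    then have "T'_glued a = H.T' a" by (simp add: T'_glued_def a0_def[symmetric])
    then show ?thesis
      using less by (auto intro: has_field_derivative_transform_within_open[OF H.T_has_derivative[OF assms(2)],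
          where S = "{..<a0}"])
  next
    case equal
    have "(?F has_real_derivative G.T' a0) (at a0)"
      using H.T_has_derivative[OF a0] G.T_has_derivative[OF a0] J
      by (intro has_real_derivative_if_split) simp_all
    moreover have "T'_glued a0 = G.T' a0" using J(2) by (simp add: T'_glued_def a0_def[symmetric])
    ultimately show ?thesis using equal by simp
  next
    case greater
    then have "T'_glued a = G.T' a" by (simp add: T'_glued_def a0_def[symmetric])
    then show ?thesis
      using greater by (auto intro: has_field_derivative_transform_within_open[OF G.T_has_derivative[OF assms(2)],
          where S = "{a0<..}"])
  qed
  have "?F x = TT \<beta> \<delta> x" if "x \<in> {0<..}" for x
    using TT_eq_glued[OF assms(1)] that by (simp add: a0_def)
  then show ?thesis
    using has_field_derivative_transform_within_open[OF F, where S = "{0<..}"] assms(2) by simp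
qed

lemma continuous_on_T'_glued:
  assumes "\<delta> < \<beta>/2"
  shows "continuous_on {0<..} T'_glued"
proof -
  define a0 where "a0 = 1 / sqrt q_junction"
  have H: "continuous_on {0<..} H.T'" and G: "continuous_on {0<..} G.T'"
    using H.T'_has_derivative G.T'_has_derivative
    by (auto intro!: continuous_at_imp_continuous_on DERIV_isCont)
  have "continuous_on {x \<in> {0<..}. x \<le> a0} H.T'" "continuous_on {x \<in> {0<..}. a0 \<le> x} G.T'"
    by (auto intro: continuous_on_subset[OF H] continuous_on_subset[OF G])
  then have "continuous_on {0<..} (\<lambda>a. if a \<le> a0 then H.T' a else G.T' a)"
    by (rule continuous_on_cases_le[where h = "\<lambda>x. x"])
       (use junction[OF assms, folded a0_def] in \<open>auto intro!: continuous_intros\<close>)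
  then show ?thesis by (simp add: T'_glued_def[abs_def] a0_def)
qed

lemma TT_C1: "TT \<beta> \<delta> C1_differentiable_on {0<..}"
proof (cases "\<beta>/2 \<le> \<delta>")
  case True
  have "continuous_on {0<..} H.T'"
    using H.T'_has_derivative by (auto intro!: continuous_at_imp_continuous_on DERIV_isCont)
  then show ?thesis
    using TT_has_derivative_large[OF True] by (intro C1_differentiable_on_if_deriv) auto
next
  case False
  then show ?thesis
    using TT_has_derivative_small continuous_on_T'_glued
    by (intro C1_differentiable_on_if_deriv) auto
qed

lemma strict_antimono_on_G_T': "strict_antimono_on {0<..} G.T'"
  using G.T'_has_derivative G_T''_neg by (intro strict_antimono_on_if_deriv_neg) auto

lemma strict_antimono_on_H_T':
  assumes "\<delta> \<le> \<beta>/2"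
  shows "strict_antimono_on {0<..} H.T'"
proof (rule strict_antimono_on_if_deriv_neg)
  fix a :: real assume "a \<in> {0<..}"
  then have a: "0 < a" by simp
  show "(H.T' has_real_derivative H.T'' a) (at a)" by (rule H.T'_has_derivative[OF a])
  have "\<not> 0 < Hderiv \<beta> (\<delta> - \<beta>/2) 1 (-(\<delta> - \<beta>/2))"
    using Hderiv1_neg_shift_pos_iff[OF abs_shift_less] assms by simp
  moreover have "0 < 1/a^2" using a by simp
  ultimately have "Hderiv \<beta> (\<delta> - \<beta>/2) 1 (-(\<delta> - \<beta>/2)) < 1/a^2" by linarith
  then show "H.T'' a < 0"
    using H_T''_sign(1)[OF a] sdelta_shift_le_iff(2)[of "1/a^2"] by simp
qed simp

lemma TT_strict_concave_small:
  assumes "\<delta> \<le> \<beta>/2"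
  shows "strict_concave_on {0<..} (TT \<beta> \<delta>)"
proof (cases "\<delta> = \<beta>/2")
  case True
  then show ?thesis
    using TT_has_derivative_large strict_antimono_on_H_T'[OF assms]
    by (intro strict_concave_on_if_deriv_strict_antimono) auto
next
  case False
  then have small: "\<delta> < \<beta>/2" using assms by simp
  define a0 where "a0 = 1 / sqrt q_junction"
  have a0: "0 < a0" using q_junction_pos[OF small] by (simp add: a0_def)
  note J = junction[OF small, folded a0_def]
  have "strict_antimono_on {0<..} T'_glued"
  proof (rule monotone_onI)
    fix x y :: real assume xy: "x \<in> {0<..}" "y \<in> {0<..}" "x < y"
    have Hmono: "H.T' y < H.T' x" if "y \<le> a0" "x < y" "0 < x" for x y
      using monotone_onD[OF strict_antimono_on_H_T'[OF assms], of x y] that by auto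
    have Gmono: "G.T' y < G.T' x" if "a0 \<le> x" "x < y" for x y
      using monotone_onD[OF strict_antimono_on_G_T', of x y] that a0 by auto
    consider "y \<le> a0" | "x \<le> a0" "a0 < y" | "a0 < x" using xy by linarith
    then show "T'_glued y < T'_glued x"
    proof cases
      case 1 then show ?thesis using Hmono xy by (simp add: T'_glued_def a0_def[symmetric])
    next
      case 2
      have "H.T' a0 \<le> H.T' x"
      proof (cases "x = a0")
        case False
        then have "x < a0" using 2 by simp
        then show ?thesis
          using monotone_onD[OF strict_antimono_on_H_T'[OF assms], of x a0] xy a0 by simp
      qed simp
      then show ?thesis
        using 2 Gmono[of a0 y] J(2) by (simp add: T'_glued_def a0_def[symmetric])
    next
      case 3 then show ?thesis using Gmono xy by (simp add: T'_glued_def a0_def[symmetric])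
    qed
  qed
  then show ?thesis
    using TT_has_derivative_small[OF small]
    by (intro strict_concave_on_if_deriv_strict_antimono) auto
qed

lemma deriv_TT_C1_small:
  assumes "\<delta> < \<beta>/2"
  defines "A \<equiv> {0<..<1 / sqrt (qdelta \<beta> \<delta>)} \<union> {1 / sqrt (qdelta \<beta> \<delta>)<..}"
  shows "deriv (TT \<beta> \<delta>) C1_differentiable_on A"
proof -
  define a0 where "a0 = 1 / sqrt q_junction"
  have A: "A = {0<..<a0} \<union> {a0<..}" by (simp add: A_def a0_def qdelta_eq[OF assms(1)])
  have a0: "0 < a0" using q_junction_pos[OF assms(1)] by (simp add: a0_def)
  have dT: "deriv (TT \<beta> \<delta>) y = T'_glued y" if "0 < y" for y
    using TT_has_derivative_small[OF assms(1) that] by (rule DERIV_imp_deriv)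
  define D where "D x = (if x \<le> a0 then H.T'' x else G.T'' x)" for x
  have "(deriv (TT \<beta> \<delta>) has_real_derivative D x) (at x)" if x: "x \<in> A" for x
  proof (cases "x < a0")
    case True
    then have "0 < x" using x by (auto simp: A)
    from has_field_derivative_transform_within_open[OF H.T'_has_derivative[OF this], where S = "{0<..<a0}"]
    show ?thesis
      using True \<open>0 < x\<close> dT by (auto simp: D_def T'_glued_def a0_def[symmetric])
  next
    case False
    then have "a0 < x" using x by (auto simp: A)
    from has_field_derivative_transform_within_open[OF G.T'_has_derivative, where S = "{a0<..}"]
    show ?thesis
      using \<open>a0 < x\<close> a0 dT by (auto simp: D_def T'_glued_def a0_def[symmetric])
  qed
  moreover have "continuous_on {x \<in> A. x \<le> a0} H.T''" "continuous_on {x \<in> A. a0 \<le> x} G.T''"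
    using a0 by (auto simp: A intro: continuous_on_subset[OF H.continuous_on_T'']
        continuous_on_subset[OF G.continuous_on_T''])
  then have "continuous_on A D"
    unfolding D_def by (rule continuous_on_cases_le[where h = "\<lambda>x. x"]) (auto intro!: continuous_intros simp: A)
  ultimately show ?thesis by (rule C1_differentiable_on_if_deriv)
qed

lemma deriv_TT_C1_large:
  assumes "\<beta>/2 \<le> \<delta>"
  shows "deriv (TT \<beta> \<delta>) C1_differentiable_on {0<..}"
proof (rule C1_differentiable_on_if_deriv[OF _ H.continuous_on_T''])
  fix x :: real assume "x \<in> {0<..}"
  then show "(deriv (TT \<beta> \<delta>) has_real_derivative H.T'' x) (at x)"
    using has_field_derivative_transform_within_open[OF H.T'_has_derivative, where S = "{0<..}"]
      TT_has_derivative_large[OF assms, THEN DERIV_imp_deriv]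
    by auto
qed

lemma TT_concave_convex_large:
  assumes "\<beta>/2 < \<delta>"
  shows "strict_concave_on {0<..<1 / sqrt (qstar \<beta> \<delta>)} (TT \<beta> \<delta>)"
    "strict_convex_on {1 / sqrt (qstar \<beta> \<delta>)<..} (TT \<beta> \<delta>)"
proof -
  define qs where "qs = qstar \<beta> \<delta>"
  have qs: "0 < qs" using qstar_large(2)[OF assms] by (simp add: qs_def)
  have qs_eq: "qs = Hderiv \<beta> (\<delta> - \<beta>/2) 1 (-(\<delta> - \<beta>/2))"
    using qstar_large(1)[OF assms] by (simp add: qs_def)
  have "0 < 1 / sqrt qs" using qs by simp
  then have pos: "0 < z" if "1 / sqrt qs < z" for z
    using that by linarith
  have D: "(TT \<beta> \<delta> has_real_derivative H.T' z) (at z)" if "0 < z" for z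
    using TT_has_derivative_large assms that by simp
  show "strict_concave_on {0<..<1 / sqrt (qstar \<beta> \<delta>)} (TT \<beta> \<delta>)"
    unfolding qs_def[symmetric]
  proof (rule strict_concave_on_if_deriv_strict_antimono)
    show "strict_antimono_on {0<..<1 / sqrt qs} H.T'"
    proof (rule strict_antimono_on_if_deriv_neg)
      fix z assume "z \<in> {0<..<1 / sqrt qs}"
      then have z: "0 < z" "qs < 1 / z^2" using less_inverse_sqrt_iff(1)[OF _ qs] by auto
      show "(H.T' has_real_derivative H.T'' z) (at z)" by (rule H.T'_has_derivative[OF z(1)])
      show "H.T'' z < 0"
        using H_T''_sign(1)[OF z(1)] sdelta_shift_le_iff(2)[of "1/z^2"] z qs_eq by simp
    qed simp
  qed (use D in auto)
  show "strict_convex_on {1 / sqrt (qstar \<beta> \<delta>)<..} (TT \<beta> \<delta>)"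
    unfolding qs_def[symmetric]
  proof (rule strict_convex_on_if_deriv_strict_mono)
    show "strict_mono_on {1 / sqrt qs<..} H.T'"
    proof (rule strict_mono_on_if_deriv_pos)
      fix z assume "z \<in> {1 / sqrt qs<..}"
      then have z: "0 < z" "1 / z^2 < qs" using pos less_inverse_sqrt_iff(2)[OF _ qs] by auto
      show "(H.T' has_real_derivative H.T'' z) (at z)" by (rule H.T'_has_derivative[OF z(1)])
      show "0 < H.T'' z"
        using H_T''_sign(2)[OF z(1)] sdelta_shift_le_iff(1)[of "1/z^2"] z qs_eq by simp
    qed simp
  qed (use D pos in auto)
qed

end

theorem mainTheorem12:
  fixes \<beta> \<delta> :: real
  assumes "\<beta> > beta_c" and "0 < \<delta>" and "\<delta> < \<beta>"
  shows "TT \<beta> \<delta> C1_differentiable_on {0<..}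
    \<and> (\<delta> < \<beta>/2 \<longrightarrow>
         TT \<beta> \<delta> C1_differentiable_on ({0<..<1 / sqrt (qdelta \<beta> \<delta>)} \<union> {1 / sqrt (qdelta \<beta> \<delta>)<..})
       \<and> deriv (TT \<beta> \<delta>) C1_differentiable_on ({0<..<1 / sqrt (qdelta \<beta> \<delta>)} \<union> {1 / sqrt (qdelta \<beta> \<delta>)<..}))
    \<and> (\<beta>/2 \<le> \<delta> \<longrightarrow>
         deriv (TT \<beta> \<delta>) C1_differentiable_on {0<..})
    \<and> (\<delta> \<le> \<beta>/2 \<longrightarrow> qstar \<beta> \<delta> = 0 \<and> strict_concave_on {0<..} (TT \<beta> \<delta>))
    \<and> (\<beta>/2 < \<delta> \<longrightarrow> qstar \<beta> \<delta> > 0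
         \<and> strict_concave_on {0<..<1 / sqrt (qstar \<beta> \<delta>)} (TT \<beta> \<delta>)
         \<and> strict_convex_on {1 / sqrt (qstar \<beta> \<delta>)<..} (TT \<beta> \<delta>))"
proof -
  interpret beta_delta \<beta> \<delta> by unfold_locales (use assms in auto)
  have "TT \<beta> \<delta> C1_differentiable_on ({0<..<1 / sqrt (qdelta \<beta> \<delta>)} \<union> {1 / sqrt (qdelta \<beta> \<delta>)<..})"
    if "\<delta> < \<beta>/2"
    using qdelta_eq[OF that] q_junction_pos[OF that]
    by (intro C1_differentiable_on_subset[OF TT_C1]) auto
  with TT_C1 deriv_TT_C1_small deriv_TT_C1_large qstar_small TT_strict_concave_small
    qstar_large(2) TT_concave_convex_large
  show ?thesis by blast
qed

end
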